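(* Let $G$ be a 2-connected graph, $S$ an SPQR-tree of $G$, and $(B_a:a\in V(T))$ a tree decomposition of $G$ obtained from $S$ by the construction described in the context. Let $v\in V(G)$ and let $h\ge 1$ be an integer. If $T[v]$ has pathwidth greater than $2^{2h+1}-3$, then $S[v]$ contains a subdivision of $T_h$.
   Context: SPQR-tree. For a 2-connected graph $G$, an SPQR-tree $S$ is a tree whose nodes $a$ are each of type S, P or R and carry a multigraph $H_a$ whose edges are classified as real or virtual, defined recursively: (i) if $G$ is a cycle, $S$ is a single S-node $a$ with $H_a=G$, all edges real; (ii) if $G$ is 3-connected, $S$ is a single R-node $a$ with $H_a=G$, all edges real; (iii) otherwise $G$ has a cutset $\{x,y\}$ with $x,y$ of degree at least 3; let $C_1,\dots,C_r$ ($r\ge2$) be the components of $G-\{x,y\}$ and let $\tilde G_i$ be $G[V(C_i)\cup\{x,y\}]$ plus the edge $xy$ if absent (treated as real); let $S_i$ be an SPQR-tree of $\tilde G_i$, and let $a_i$ be the unique node of $S_i$ in which $xy$ is a real edge of $H_{a_i}$. Then $S$ is formed from $S_1,\dots,S_r$ by adding a P-node $a$ with $H_a$ the dipole on $\{x,y\}$ with $r$ virtual edges $xy$ plus a real edge $xy$ if $xy\in E(G)$, making $a$ adjacent to each $a_i$, and reclassifying $xy$ as virtual in each $H_{a_i}$. For $v\in V(G)$, $S[v]$ is the subtree of $S$ induced by the nodes $a$ with $v\in V(H_a)$. Construction of $T$. For each S- or R-node $a$ of $S$ fix a minimum-width path decomposition $(B_c:c\in V(P_a))$ of $H_a$ indexed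 by a path $P_a$. The tree $T$ has as nodes the nodes of all paths $P_a$ (with their path edges) and the P-nodes of $S$; for each P-node $b$ of $S$ with $V(H_b)=\{x,y\}$ and each S- or R-node neighbour $a$ of $b$ in $S$, add to $T$ an edge between $b$ and one node $c$ of $P_a$ with $x,y\in B_c$. The bag of a P-node $b$ is $B_b=V(H_b)$. For $v\in V(G)$, $T[v]$ is the subtree of $T$ induced by the nodes whose bags contain $v$. $T_h$ is the complete binary tree of height $h$ (every non-leaf vertex has two children, all leaves at distance $h$ from the root). Pathwidth is the minimum width (maximum bag size minus 1) of a path decomposition. *)

theory Defs
  imports Main "HOL-Library.Multiset"
begin

definition graph :: "'v set \<Rightarrow> 'v set set \<Rightarrow> bool" where
  "graph V E \<longleftrightarrow> finite V \<and> (\<forall>e\<in>E. \<exists>u w. e = {u, w} \<and> u \<noteq> w \<and> u \<in> V \<and> w \<in> V)"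

definition induced_edges :: "'v set set \<Rightarrow> 'v set \<Rightarrow> 'v set set" where
  "induced_edges E W = {e \<in> E. e \<subseteq> W}"

definition degree :: "'v set set \<Rightarrow> 'v \<Rightarrow> nat" where
  "degree E u = card {e \<in> E. u \<in> e}"

definition adjrel :: "'v set \<Rightarrow> 'v set set \<Rightarrow> ('v \<times> 'v) set" where
  "adjrel W E = {(u, w). {u, w} \<in> E \<and> u \<in> W \<and> w \<in> W}"

definition connected_graph :: "'v set \<Rightarrow> 'v set set \<Rightarrow> bool" where
  "connected_graph W E \<longleftrightarrow> W \<noteq> {} \<and> (\<forall>u\<in>W. \<forall>w\<in>W. (u, w) \<in> (adjrel W E)\<^sup>*)"

definition components :: "'v set \<Rightarrow> 'v set set \<Rightarrow> 'v set set" where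
  "components W E = {{w \<in> W. (u, w) \<in> (adjrel W E)\<^sup>*} | u. u \<in> W}"

definition k_connected :: "nat \<Rightarrow> 'v set \<Rightarrow> 'v set set \<Rightarrow> bool" where
  "k_connected k V E \<longleftrightarrow> graph V E \<and> card V > k \<and>
     (\<forall>X \<subseteq> V. card X < k \<longrightarrow> connected_graph (V - X) (induced_edges E (V - X)))"

definition is_cycle :: "'v set \<Rightarrow> 'v set set \<Rightarrow> bool" where
  "is_cycle V E \<longleftrightarrow> graph V E \<and> card V \<ge> 3 \<and> connected_graph V E \<and> (\<forall>u\<in>V. degree E u = 2)"

definition is_path :: "'v set \<Rightarrow> 'v set set \<Rightarrow> 'v list \<Rightarrow> bool" where
  "is_path V E ps \<longleftrightarrow> ps \<noteq> [] \<and> distinct ps \<and> set ps \<subseteq> V \<and>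
     (\<forall>i. Suc i < length ps \<longrightarrow> {ps ! i, ps ! Suc i} \<in> E)"

definition contains_subdivision ::
  "'a set \<Rightarrow> 'a set set \<Rightarrow> 'b set \<Rightarrow> 'b set set \<Rightarrow> bool" where
  "contains_subdivision VH EH VG EG \<longleftrightarrow>
     (\<exists>(\<phi> :: 'a \<Rightarrow> 'b) (P :: 'a set \<Rightarrow> 'b list).
        inj_on \<phi> VH \<and> \<phi> ` VH \<subseteq> VG \<and>
        (\<forall>e\<in>EH. is_path VG EG (P e) \<and> {hd (P e), last (P e)} = \<phi> ` e \<and>
                  set (butlast (tl (P e))) \<inter> \<phi> ` VH = {}) \<and>
        (\<forall>e\<in>EH. \<forall>e'\<in>EH. e \<noteq> e' \<longrightarrow>
                  set (butlast (tl (P e))) \<inter> set (butlast (tl (P e'))) = {}))"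

text \<open>Complete binary tree of height h: vertices are 0/1-words of length at most h
  (the root is the empty word), a word xs has children b # xs.\<close>
definition cbt_verts :: "nat \<Rightarrow> bool list set" where
  "cbt_verts h = {xs. length xs \<le> h}"

definition cbt_edges :: "nat \<Rightarrow> bool list set set" where
  "cbt_edges h = {{xs, b # xs} | xs b. length xs < h}"

definition is_path_decomp :: "'v set \<Rightarrow> 'v set set \<Rightarrow> 'v set list \<Rightarrow> bool" where
  "is_path_decomp V E bs \<longleftrightarrow> bs \<noteq> [] \<and> (\<forall>B\<in>set bs. B \<subseteq> V) \<and>
     (\<forall>u\<in>V. \<exists>i<length bs. u \<in> bs ! i) \<and>
     (\<forall>e\<in>E. \<exists>i<length bs. e \<subseteq> bs ! i) \<and>
     (\<forall>u i j k. i \<le> j \<and> j \<le> k \<and> k < length bs \<and> u \<in> bs ! i \<and> u \<in> bs ! k \<longrightarrow> u \<in> bs ! j)"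

definition pd_width :: "'v set list \<Rightarrow> nat" where
  "pd_width bs = Max (card ` set bs) - 1"

definition pathwidth :: "'v set \<Rightarrow> 'v set set \<Rightarrow> nat" where
  "pathwidth V E = (LEAST w. \<exists>bs. is_path_decomp V E bs \<and> pd_width bs = w)"

datatype nodetype = SNode | PNode | RNode

text \<open>An SPQR-tree: nodes (of type 'n), tree edges, node types, and for each node a
  multigraph H_a given by its vertex set and multisets of real and virtual edges.\<close>
record ('n, 'v) spqr =
  nodes :: "'n set"
  tedges :: "'n set set"
  ntype :: "'n \<Rightarrow> nodetype"
  hverts :: "'n \<Rightarrow> 'v set"
  hreal :: "'n \<Rightarrow> 'v set multiset"
  hvirt :: "'n \<Rightarrow> 'v set multiset"

inductive is_spqr_tree :: "'v set \<Rightarrow> 'v set set \<Rightarrow> ('n, 'v) spqr \<Rightarrow> bool" where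
  cycle: "\<lbrakk> is_cycle V E; nodes S = {a}; tedges S = {}; ntype S a = SNode;
            hverts S a = V; hreal S a = mset_set E; hvirt S a = {#} \<rbrakk>
          \<Longrightarrow> is_spqr_tree V E S"
| rigid: "\<lbrakk> k_connected 3 V E; nodes S = {a}; tedges S = {}; ntype S a = RNode;
            hverts S a = V; hreal S a = mset_set E; hvirt S a = {#} \<rbrakk>
          \<Longrightarrow> is_spqr_tree V E S"
| split: "\<lbrakk> graph V E; \<not> is_cycle V E; \<not> k_connected 3 V E;
            x \<in> V; y \<in> V; x \<noteq> y; degree E x \<ge> 3; degree E y \<ge> 3;
            Cs = components (V - {x, y}) (induced_edges E (V - {x, y}));
            card Cs \<ge> 2;
            \<forall>C\<in>Cs. is_spqr_tree (C \<union> {x, y}) (induced_edges E (C \<union> {x, y}) \<union> {{x, y}}) (Sub C);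
            \<forall>C\<in>Cs. aC C \<in> nodes (Sub C) \<and> {x, y} \<in># hreal (Sub C) (aC C) \<and>
                    (\<forall>a'\<in>nodes (Sub C). {x, y} \<in># hreal (Sub C) a' \<longrightarrow> a' = aC C);
            \<forall>C\<in>Cs. \<forall>D\<in>Cs. C \<noteq> D \<longrightarrow> nodes (Sub C) \<inter> nodes (Sub D) = {};
            \<forall>C\<in>Cs. p \<notin> nodes (Sub C);
            nodes S = insert p (\<Union>C\<in>Cs. nodes (Sub C));
            tedges S = (\<Union>C\<in>Cs. tedges (Sub C)) \<union> {{p, aC C} | C. C \<in> Cs};
            ntype S p = PNode; hverts S p = {x, y};
            hreal S p = (if {x, y} \<in> E then {#{x, y}#} else {#});
            hvirt S p = replicate_mset (card Cs) {x, y};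
            \<forall>C\<in>Cs. \<forall>a\<in>nodes (Sub C).
               ntype S a = ntype (Sub C) a \<and> hverts S a = hverts (Sub C) a \<and>
               hreal S a = (if a = aC C then hreal (Sub C) a - {#{x, y}#} else hreal (Sub C) a) \<and>
               hvirt S a = (if a = aC C then add_mset {x, y} (hvirt (Sub C) a) else hvirt (Sub C) a) \<rbrakk>
          \<Longrightarrow> is_spqr_tree V E S"

definition spqr_sub_verts :: "('n, 'v) spqr \<Rightarrow> 'v \<Rightarrow> 'n set" where
  "spqr_sub_verts S v = {a \<in> nodes S. v \<in> hverts S a}"

definition spqr_sub_edges :: "('n, 'v) spqr \<Rightarrow> 'v \<Rightarrow> 'n set set" where
  "spqr_sub_edges S v = induced_edges (tedges S) (spqr_sub_verts S v)"

text \<open>Parameters: pd a is the chosen path decomposition (bags B_c, c = 0..length-1 along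
  the path P_a) of H_a for each S- or R-node a; att b a is the index of the node of P_a
  to which the P-node b is attached.  Nodes of T: Inl (a, i) is the i-th node of P_a,
  Inr b is the P-node b.\<close>
definition spqr_td :: "('n, 'v) spqr \<Rightarrow> ('n \<Rightarrow> 'v set list) \<Rightarrow> ('n \<Rightarrow> 'n \<Rightarrow> nat) \<Rightarrow> bool" where
  "spqr_td S pd att \<longleftrightarrow>
     (\<forall>a\<in>nodes S. ntype S a \<noteq> PNode \<longrightarrow>
        (let HV = hverts S a; HE = set_mset (hreal S a + hvirt S a) in
          is_path_decomp HV HE (pd a) \<and> pd_width (pd a) = pathwidth HV HE)) \<and>
     (\<forall>b\<in>nodes S. ntype S b = PNode \<longrightarrow>
        (\<forall>a\<in>nodes S. {a, b} \<in> tedges S \<and> ntype S a \<noteq> PNode \<longrightarrow>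
           att b a < length (pd a) \<and> hverts S b \<subseteq> pd a ! att b a))"

definition T_verts :: "('n, 'v) spqr \<Rightarrow> ('n \<Rightarrow> 'v set list) \<Rightarrow> ('n \<times> nat + 'n) set" where
  "T_verts S pd = {Inl (a, i) | a i. a \<in> nodes S \<and> ntype S a \<noteq> PNode \<and> i < length (pd a)}
                  \<union> {Inr b | b. b \<in> nodes S \<and> ntype S b = PNode}"

definition T_edges :: "('n, 'v) spqr \<Rightarrow> ('n \<Rightarrow> 'v set list) \<Rightarrow> ('n \<Rightarrow> 'n \<Rightarrow> nat) \<Rightarrow> ('n \<times> nat + 'n) set set" where
  "T_edges S pd att =
     {{Inl (a, i), Inl (a, Suc i)} | a i. a \<in> nodes S \<and> ntype S a \<noteq> PNode \<and> Suc i < length (pd a)}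
   \<union> {{Inr b, Inl (a, att b a)} | a b. a \<in> nodes S \<and> b \<in> nodes S \<and> ntype S b = PNode \<and>
          ntype S a \<noteq> PNode \<and> {a, b} \<in> tedges S}"

definition T_bag :: "('n, 'v) spqr \<Rightarrow> ('n \<Rightarrow> 'v set list) \<Rightarrow> ('n \<times> nat + 'n) \<Rightarrow> 'v set" where
  "T_bag S pd t = (case t of Inl (a, i) \<Rightarrow> pd a ! i | Inr b \<Rightarrow> hverts S b)"

definition T_sub_verts :: "('n, 'v) spqr \<Rightarrow> ('n \<Rightarrow> 'v set list) \<Rightarrow> 'v \<Rightarrow> ('n \<times> nat + 'n) set" where
  "T_sub_verts S pd v = {t \<in> T_verts S pd. v \<in> T_bag S pd t}"

definition T_sub_edges :: "('n, 'v) spqr \<Rightarrow> ('n \<Rightarrow> 'v set list) \<Rightarrow> ('n \<Rightarrow> 'n \<Rightarrow> nat) \<Rightarrow> 'v \<Rightarrow> ('n \<times> nat + 'n) set set" where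
  "T_sub_edges S pd att v = induced_edges (T_edges S pd att) (T_sub_verts S pd v)"

end

theory Submission
  imports Defs
begin

text \<open>Let \<open>has_cbt k s\<close> mean that some node of the subtree of \<open>s\<close> in \<open>S[v]\<close> has two distinct
  children satisfying \<open>has_cbt (k - 1)\<close> (a Strahler-type rank); such a node yields a subdivision of
  \<open>T\<^sub>k\<close> in \<open>S[v]\<close>. The tree \<open>T[v]\<close> arises from \<open>S[v]\<close> by blowing every node up into a path and
  joining each child to a point of the path of its parent. If no node satisfies \<open>has_cbt (k + 1)\<close>,
  then, by induction over the subtrees, the part of \<open>T[v]\<close> below a node has an interval layout of
  width \<open>4k + 4\<close>: lay out the path of the node with at most 4 intervals per point, append the
  layout of its unique child subtree of rank \<open>k\<close> (if any) behind it, and insert the layouts of the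
  child subtrees of lower rank, which have width \<open>4k\<close>, at points of load at most 4 of the path.
  Hence \<open>T[v]\<close> has pathwidth at most \<open>4h - 1 \<le> 2\<^sup>2\<^sup>h\<^sup>+\<^sup>1 - 3\<close> unless \<open>S[v]\<close> contains a
  subdivision of \<open>T\<^sub>h\<close>.\<close>

section \<open>Interval layouts\<close>

definition load :: "'t set \<Rightarrow> ('t \<Rightarrow> nat) \<Rightarrow> ('t \<Rightarrow> nat) \<Rightarrow> nat \<Rightarrow> nat" where
  "load Y l r t = card {u \<in> Y. l u \<le> t \<and> t \<le> r u}"

text \<open>The
  sets of intervals through the points are the bags of a path decomposition.\<close>
definition layout :: "'t set set \<Rightarrow> nat \<Rightarrow> 't set \<Rightarrow> nat \<Rightarrow> ('t \<Rightarrow> nat) \<Rightarrow> ('t \<Rightarrow> nat) \<Rightarrow> bool" where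
  "layout E W Y n l r \<longleftrightarrow> finite Y \<and> 0 < n \<and> (\<forall>u\<in>Y. l u \<le> r u \<and> r u < n) \<and>
     (\<forall>e\<in>E. e \<subseteq> Y \<longrightarrow> (\<exists>t. \<forall>u\<in>e. l u \<le> t \<and> t \<le> r u)) \<and> (\<forall>t<n. load Y l r t \<le> W)"

lemma layoutD:
  assumes "layout E W Y n l r"
  shows "finite Y" "0 < n" "u \<in> Y \<Longrightarrow> l u \<le> r u" "u \<in> Y \<Longrightarrow> r u < n"
    "e \<in> E \<Longrightarrow> e \<subseteq> Y \<Longrightarrow> \<exists>t. \<forall>u\<in>e. l u \<le> t \<and> t \<le> r u" "t < n \<Longrightarrow> load Y l r t \<le> W"
  using assms unfolding layout_def by auto

lemma layout_point:
  assumes "layout E W Y n l r" "u \<in> Y"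
  shows "\<exists>t<n. l u \<le> t \<and> t \<le> r u \<and> load Y l r t \<le> W"
  using layoutD(3,4,6)[OF assms(1)] assms(2) le_less_trans by (intro exI[of _ "l u"]) blast

lemma layout_empty: "layout E W {} 1 l r"
  unfolding layout_def load_def by auto

lemma layout_mono: "layout E W Y n l r \<Longrightarrow> W \<le> W' \<Longrightarrow> layout E W' Y n l r"
  unfolding layout_def by force

lemma layout_edges_subset: "layout E W Y n l r \<Longrightarrow> E' \<subseteq> E \<Longrightarrow> layout E' W Y n l r"
  unfolding layout_def by blast

lemma pathwidth_le_layout:
  assumes L: "layout E W Y n l r" and EY: "\<forall>e\<in>E. e \<subseteq> Y"
  shows "pathwidth Y E \<le> W - 1"
proof -
  define bs where "bs = map (\<lambda>t. {u\<in>Y. l u \<le> t \<and> t \<le> r u}) [0..<n]"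
  have len: "length bs = n" and nth: "i < n \<Longrightarrow> bs ! i = {u\<in>Y. l u \<le> i \<and> i \<le> r u}" for i
    unfolding bs_def by simp_all
  have "is_path_decomp Y E bs"
    unfolding is_path_decomp_def
  proof (intro conjI ballI allI impI)
    show "bs \<noteq> []" using layoutD(2)[OF L] len by auto
    show "\<exists>i<length bs. u \<in> bs ! i" if "u \<in> Y" for u
    proof -
      have "l u < n" using that layoutD(3,4)[OF L] le_less_trans by blast
      then show ?thesis using that layoutD(3)[OF L] nth len by (intro exI[of _ "l u"]) auto
    qed
    show "\<exists>i<length bs. e \<subseteq> bs ! i" if e: "e \<in> E" for e
    proof -
      obtain t where t: "\<forall>u\<in>e. l u \<le> t \<and> t \<le> r u" using layoutD(5)[OF L e] EY e by blast
      show ?thesis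
      proof (cases "e = {}")
        case False
        then have "t < n" using t EY e layoutD(4)[OF L] by fastforce
        then show ?thesis using t EY e nth len by (intro exI[of _ t]) auto
      qed (use len layoutD(2)[OF L] in auto)
    qed
  qed (use nth len in \<open>auto simp: bs_def\<close>)
  moreover have "pd_width bs \<le> W - 1"
  proof -
    have "Max (card ` set bs) \<le> W"
      using layoutD(2,6)[OF L] nth len by (intro Max.boundedI) (auto simp: in_set_conv_nth load_def)
    then show ?thesis unfolding pd_width_def by simp
  qed
  ultimately show ?thesis
    unfolding pathwidth_def by (metis (mono_tags, lifting) Least_le le_trans)
qed

text \<open>Splicing the layout \<open>(n2, l2, r2)\<close> of \<open>Y2\<close> into the layout of \<open>Y1\<close> right after point \<open>\<tau>\<close>:
  intervals of \<open>Y1\<close> passing over \<open>\<tau>\<close> are stretched across the inserted block, and those in \<open>P\<close>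
  that end at \<open>\<tau>\<close> are extended by one point to meet its first point.\<close>
definition open_gap :: "nat \<Rightarrow> nat \<Rightarrow> nat \<Rightarrow> nat" where
  "open_gap \<tau> m t = (if t \<le> \<tau> then t else t + m)"

definition splice_lo :: "'t set \<Rightarrow> ('t \<Rightarrow> nat) \<Rightarrow> nat \<Rightarrow> nat \<Rightarrow> ('t \<Rightarrow> nat) \<Rightarrow> 't \<Rightarrow> nat" where
  "splice_lo Y1 l1 \<tau> n2 l2 u = (if u \<in> Y1 then open_gap \<tau> n2 (l1 u) else \<tau> + 1 + l2 u)"

definition splice_hi ::
  "'t set \<Rightarrow> ('t \<Rightarrow> nat) \<Rightarrow> nat \<Rightarrow> nat \<Rightarrow> 't set \<Rightarrow> ('t \<Rightarrow> nat) \<Rightarrow> 't \<Rightarrow> nat" where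
  "splice_hi Y1 r1 \<tau> n2 P r2 u =
     (if u \<in> Y1 then (if u \<in> P \<and> r1 u = \<tau> then \<tau> + 1 else open_gap \<tau> n2 (r1 u)) else \<tau> + 1 + r2 u)"

lemma open_gap_le_iff: "open_gap \<tau> m a \<le> open_gap \<tau> m b \<longleftrightarrow> a \<le> b"
  unfolding open_gap_def by auto

lemma open_gap_cases:
  assumes "t < n1 + n2" "\<tau> < n1"
  obtains t' where "t' < n1" "t = open_gap \<tau> n2 t'" | t' where "t' < n2" "t = \<tau> + 1 + t'"
proof (cases "t \<le> \<tau> \<or> \<tau> + n2 < t")
  case True
  then show thesis using that(1)[of "if t \<le> \<tau> then t else t - n2"] assms
    unfolding open_gap_def by (auto split: if_splits)
next
  case False
  then show thesis using that(2)[of "t - \<tau> - 1"] by auto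
qed

context
  fixes E :: "'t set set" and Y1 Y2 :: "'t set" and W1 W2 n1 n2 \<tau> :: nat
    and l1 r1 l2 r2 :: "'t \<Rightarrow> nat" and P :: "'t set"
  assumes L1: "layout E W1 Y1 n1 l1 r1" and L2: "layout E W2 Y2 n2 l2 r2"
    and tau: "\<tau> < n1" and disj: "Y1 \<inter> Y2 = {}"
begin

abbreviation "l' \<equiv> splice_lo Y1 l1 \<tau> n2 l2"
abbreviation "r' \<equiv> splice_hi Y1 r1 \<tau> n2 P r2"

lemma splice_alive_left:
  "u \<in> Y1 \<Longrightarrow> l1 u \<le> t \<Longrightarrow> t \<le> r1 u \<Longrightarrow> l' u \<le> open_gap \<tau> n2 t \<and> open_gap \<tau> n2 t \<le> r' u"
  unfolding splice_lo_def splice_hi_def open_gap_def by auto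

lemma splice_alive_right:
  "u \<in> Y2 \<Longrightarrow> l2 u \<le> t \<Longrightarrow> t \<le> r2 u \<Longrightarrow> l' u \<le> \<tau> + 1 + t \<and> \<tau> + 1 + t \<le> r' u"
  using disj unfolding splice_lo_def splice_hi_def by auto

lemma load_splice_open_gap:
  assumes "t < n1"
  shows "load (Y1 \<union> Y2) l' r' (open_gap \<tau> n2 t) = load Y1 l1 r1 t"
proof -
  have "0 < n2" using layoutD(2)[OF L2] .
  have "(u \<in> Y1 \<union> Y2 \<and> l' u \<le> open_gap \<tau> n2 t \<and> open_gap \<tau> n2 t \<le> r' u) \<longleftrightarrow>
        (u \<in> Y1 \<and> l1 u \<le> t \<and> t \<le> r1 u)" for u
  proof (cases "u \<in> Y1")
    case True
    have "l' u \<le> open_gap \<tau> n2 t \<longleftrightarrow> l1 u \<le> t"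
      using True unfolding splice_lo_def by (simp add: open_gap_le_iff)
    moreover have "open_gap \<tau> n2 t \<le> r' u \<longleftrightarrow> t \<le> r1 u"
      using True \<open>0 < n2\<close> unfolding splice_hi_def by (auto simp: open_gap_le_iff open_gap_def)
    ultimately show ?thesis using True by blast
  next
    case False
    have "u \<in> Y2 \<Longrightarrow> r' u < open_gap \<tau> n2 t \<or> open_gap \<tau> n2 t < l' u"
      using False layoutD(4)[OF L2, of u] unfolding splice_lo_def splice_hi_def open_gap_def by auto
    then show ?thesis using False by auto
  qed
  then show ?thesis unfolding load_def by simp
qed

lemma load_splice_gap:
  assumes "t < n2"
  shows "load (Y1 \<union> Y2) l' r' (\<tau> + 1 + t) \<le>
     card ({u \<in> Y1. l1 u \<le> \<tau> \<and> \<tau> < r1 u} \<union> (if t = 0 then {u \<in> Y1 \<inter> P. l1 u \<le> \<tau> \<and> r1 u = \<tau>} else {}))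
     + load Y2 l2 r2 t"
proof -
  let ?A = "{u \<in> Y1. l1 u \<le> \<tau> \<and> \<tau> < r1 u} \<union> (if t = 0 then {u \<in> Y1 \<inter> P. l1 u \<le> \<tau> \<and> r1 u = \<tau>} else {})"
  let ?B = "{u \<in> Y2. l2 u \<le> t \<and> t \<le> r2 u}"
  have "{u \<in> Y1 \<union> Y2. l' u \<le> \<tau> + 1 + t \<and> \<tau> + 1 + t \<le> r' u} \<subseteq> ?A \<union> ?B"
    using disj assms unfolding splice_lo_def splice_hi_def open_gap_def by (auto split: if_splits)
  moreover have "finite (?A \<union> ?B)" using layoutD(1)[OF L1] layoutD(1)[OF L2] by auto
  ultimately have "load (Y1 \<union> Y2) l' r' (\<tau> + 1 + t) \<le> card (?A \<union> ?B)"
    unfolding load_def by (rule card_mono[rotated])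
  also have "\<dots> \<le> card ?A + card ?B" by (rule card_Un_le)
  finally show ?thesis unfolding load_def .
qed

lemma load_splice_gap_le:
  assumes "t < n2"
  shows "load (Y1 \<union> Y2) l' r' (\<tau> + 1 + t) \<le> load Y1 l1 r1 \<tau> + load Y2 l2 r2 t"
proof -
  have "card ({u \<in> Y1. l1 u \<le> \<tau> \<and> \<tau> < r1 u} \<union> (if t = 0 then {u \<in> Y1 \<inter> P. l1 u \<le> \<tau> \<and> r1 u = \<tau>} else {}))
      \<le> load Y1 l1 r1 \<tau>"
    unfolding load_def using layoutD(1)[OF L1] by (intro card_mono) auto
  with load_splice_gap[OF assms] show ?thesis by linarith
qed

lemma load_splice_gap_end:
  assumes "t < n2" "\<tau> = n1 - 1" "finite P"
  shows "load (Y1 \<union> Y2) l' r' (\<tau> + 1 + t) \<le> (if t = 0 then card P else 0) + load Y2 l2 r2 t"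
proof -
  have none: "{u \<in> Y1. l1 u \<le> \<tau> \<and> \<tau> < r1 u} = {}" using layoutD(4)[OF L1] assms(2) by fastforce
  have "card {u \<in> Y1 \<inter> P. l1 u \<le> \<tau> \<and> r1 u = \<tau>} \<le> card P"
    using assms(3) by (intro card_mono) auto
  with load_splice_gap[OF assms(1)] show ?thesis unfolding none by (cases "t = 0") auto
qed

lemma layout_splice:
  assumes cross: "\<forall>e\<in>E. e \<subseteq> Y1 \<union> Y2 \<longrightarrow> e \<subseteq> Y1 \<or> e \<subseteq> Y2 \<or>
        (\<exists>p q. e = {p, q} \<and> p \<in> P \<and> p \<in> Y1 \<and> l1 p \<le> \<tau> \<and> \<tau> \<le> r1 p \<and> q \<in> Y2 \<and> l2 q = 0)"
    and W1: "W1 \<le> W" and gap: "\<And>t. t < n2 \<Longrightarrow> load (Y1 \<union> Y2) l' r' (\<tau> + 1 + t) \<le> W"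
  shows "layout E W (Y1 \<union> Y2) (n1 + n2) l' r'"
  unfolding layout_def
proof (intro conjI ballI impI allI)
  show "finite (Y1 \<union> Y2)" "0 < n1 + n2" using layoutD(1,2)[OF L1] layoutD(1)[OF L2] by auto
  show "l' u \<le> r' u" "r' u < n1 + n2" if "u \<in> Y1 \<union> Y2" for u
    using that tau layoutD(3,4)[OF L1, of u] layoutD(3,4)[OF L2, of u] layoutD(2)[OF L2]
    unfolding splice_lo_def splice_hi_def open_gap_def by auto
next
  fix e assume e: "e \<in> E" "e \<subseteq> Y1 \<union> Y2"
  from cross e consider "e \<subseteq> Y1" | "e \<subseteq> Y2" |
    p q where "e = {p, q}" "p \<in> P" "p \<in> Y1" "l1 p \<le> \<tau>" "\<tau> \<le> r1 p" "q \<in> Y2" "l2 q = 0"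
    by blast
  then show "\<exists>t. \<forall>u\<in>e. l' u \<le> t \<and> t \<le> r' u"
  proof cases
    case 1
    with layoutD(5)[OF L1 e(1)] obtain t where "\<forall>u\<in>e. l1 u \<le> t \<and> t \<le> r1 u" by blast
    with 1 show ?thesis using splice_alive_left by blast
  next
    case 2
    with layoutD(5)[OF L2 e(1)] obtain t where "\<forall>u\<in>e. l2 u \<le> t \<and> t \<le> r2 u" by blast
    with 2 show ?thesis using splice_alive_right by blast
  next
    case 3
    then have "q \<notin> Y1" using disj by blast
    with 3 show ?thesis
      using layoutD(3)[OF L2, of q] unfolding splice_lo_def splice_hi_def open_gap_def
      by (intro exI[of _ "\<tau> + 1"]) auto
  qed
next
  fix t assume "t < n1 + n2"
  then consider t' where "t' < n1" "t = open_gap \<tau> n2 t'" | t' where "t' < n2" "t = \<tau> + 1 + t'"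
    using tau by (rule open_gap_cases)
  then show "load (Y1 \<union> Y2) l' r' t \<le> W"
  proof cases
    case 1
    then show ?thesis using load_splice_open_gap layoutD(6)[OF L1] W1 by fastforce
  qed (use gap in blast)
qed

end

lemma layout_append:
  assumes L1: "layout E W Y1 n1 l1 r1" and L2: "layout E W Y2 n2 l2 r2" and disj: "Y1 \<inter> Y2 = {}"
    and sep: "\<forall>e\<in>E. e \<subseteq> Y1 \<union> Y2 \<longrightarrow> e \<subseteq> Y1 \<or> e \<subseteq> Y2"
  shows "\<exists>n l r. layout E W (Y1 \<union> Y2) n l r"
proof -
  have "0 < n1" using layoutD(2)[OF L1] .
  then have tau: "n1 - 1 < n1" by simp
  have "layout E W (Y1 \<union> Y2) (n1 + n2) (splice_lo Y1 l1 (n1 - 1) n2 l2) (splice_hi Y1 r1 (n1 - 1) n2 {} r2)"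
  proof (rule layout_splice[OF L1 L2 tau disj])
    show "load (Y1 \<union> Y2) (splice_lo Y1 l1 (n1 - 1) n2 l2) (splice_hi Y1 r1 (n1 - 1) n2 {} r2) (n1 - 1 + 1 + t) \<le> W"
      if "t < n2" for t
    proof -
      have "load (Y1 \<union> Y2) (splice_lo Y1 l1 (n1 - 1) n2 l2) (splice_hi Y1 r1 (n1 - 1) n2 {} r2) (n1 - 1 + 1 + t)
          \<le> load Y2 l2 r2 t"
        using load_splice_gap_end[OF L1 L2 tau disj that refl finite.emptyI]
        by (simp only: card.empty if_cancel add_0)
      then show ?thesis using layoutD(6)[OF L2 that] by linarith
    qed
  qed (use sep in auto)
  then show ?thesis by blast
qed

section \<open>Subdivisions of complete binary trees\<close>

abbreviation inner_verts :: "'a list \<Rightarrow> 'a set" where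
  "inner_verts ps \<equiv> set (butlast (tl ps))"

lemma inner_verts_subset: "inner_verts ps \<subseteq> set ps"
  by (cases ps) (auto dest: in_set_butlastD)

lemma inner_verts_not_ends:
  assumes "distinct ps" "y \<in> inner_verts ps"
  shows "y \<noteq> hd ps" "y \<noteq> last ps"
proof -
  obtain x xs where ps: "ps = x # xs" using assms(2) by (cases ps) auto
  with assms(2) have "y \<in> set (butlast xs)" by simp
  then have "xs \<noteq> []" by auto
  then have "distinct (butlast xs @ [last xs])" using assms(1) ps by simp
  then show "y \<noteq> last ps" using ps \<open>y \<in> set (butlast xs)\<close> by auto
  show "y \<noteq> hd ps" using assms(1) ps \<open>y \<in> set (butlast xs)\<close> by (auto dest: in_set_butlastD)
qed

lemma is_path_Cons:
  assumes "is_path V E ps" "x \<in> V" "x \<notin> set ps" "{x, hd ps} \<in> E"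
  shows "is_path V E (x # ps)"
  using assms unfolding is_path_def
  by (auto simp: nth_Cons hd_conv_nth split: nat.splits)

lemma cbt_verts_Suc: "cbt_verts (Suc k) = insert [] {ys @ [b] | ys b. ys \<in> cbt_verts k}"
proof (intro set_eqI iffI)
  fix xs assume xs: "xs \<in> cbt_verts (Suc k)"
  show "xs \<in> insert [] {ys @ [b] | ys b. ys \<in> cbt_verts k}"
  proof (cases xs rule: rev_cases)
    case (snoc ys b)
    then have "ys \<in> cbt_verts k" using xs unfolding cbt_verts_def by simp
    then show ?thesis using snoc by blast
  qed simp
next
  fix xs assume "xs \<in> insert [] {ys @ [b] | ys b. ys \<in> cbt_verts k}"
  then show "xs \<in> cbt_verts (Suc k)" unfolding cbt_verts_def by force
qed

lemma cbt_edge_iff: "{xs, c # xs} \<in> cbt_edges k \<longleftrightarrow> length xs < k"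
proof
  assume "{xs, c # xs} \<in> cbt_edges k"
  then obtain ys d where "{xs, c # xs} = {ys, d # ys}" "length ys < k" unfolding cbt_edges_def by auto
  then show "length xs < k" unfolding doubleton_eq_iff by (auto dest: arg_cong[of _ _ length])
qed (auto simp: cbt_edges_def)

lemma cbt_edges_Suc:
  "cbt_edges (Suc k) = {{[], [b]} | b. True} \<union> {(\<lambda>ys. ys @ [b]) ` e | e b. e \<in> cbt_edges k}"
proof (intro set_eqI iffI)
  fix e assume "e \<in> cbt_edges (Suc k)"
  then obtain xs c where e: "e = {xs, c # xs}" "length xs < Suc k" unfolding cbt_edges_def by auto
  show "e \<in> {{[], [b]} | b. True} \<union> {(\<lambda>ys. ys @ [b]) ` e | e b. e \<in> cbt_edges k}"
  proof (cases xs rule: rev_cases)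
    case Nil
    then have "e = {[], [c]}" using e by simp
    then show ?thesis by (intro UnI1 CollectI exI[of _ c]) simp
  next
    case (snoc ys b)
    have "{ys, c # ys} \<in> cbt_edges k" using e(2) snoc cbt_edge_iff by simp
    moreover have "e = (\<lambda>ys. ys @ [b]) ` {ys, c # ys}" using e(1) snoc by simp
    ultimately show ?thesis by (intro UnI2 CollectI exI[of _ "{ys, c # ys}"] exI[of _ b]) simp
  qed
next
  fix e assume "e \<in> {{[], [b]} | b. True} \<union> {(\<lambda>ys. ys @ [b]) ` e | e b. e \<in> cbt_edges k}"
  then show "e \<in> cbt_edges (Suc k)"
  proof (elim UnE CollectE exE conjE)
    fix b assume "e = {[], [b]}"
    then show ?thesis using cbt_edge_iff[of "[]" b "Suc k"] by simp
  next
    fix e' b assume "e = (\<lambda>ys. ys @ [b]) ` e'" "e' \<in> cbt_edges k"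
    then obtain xs c where "e = {xs @ [b], c # xs @ [b]}" "length xs < k"
      unfolding cbt_edges_def by auto
    then show ?thesis using cbt_edge_iff[of "xs @ [b]" c "Suc k"] by simp
  qed
qed

lemma cbt_edges_SucE:
  assumes "e \<in> cbt_edges (Suc k)"
  obtains b where "e = {[], [b]}" | b e' where "e' \<in> cbt_edges k" "e = (\<lambda>ys. ys @ [b]) ` e'"
  using assms unfolding cbt_edges_Suc by (elim UnE CollectE exE conjE) auto

definition cbt_embedding ::
  "'n set \<Rightarrow> 'n set set \<Rightarrow> nat \<Rightarrow> 'n set \<Rightarrow> (bool list \<Rightarrow> 'n) \<Rightarrow> (bool list set \<Rightarrow> 'n list) \<Rightarrow> bool" where
  "cbt_embedding V E k K \<phi> P \<longleftrightarrow>
     inj_on \<phi> (cbt_verts k) \<and> \<phi> ` cbt_verts k \<subseteq> K \<and>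
     (\<forall>e\<in>cbt_edges k. is_path V E (P e) \<and> {hd (P e), last (P e)} = \<phi> ` e \<and> set (P e) \<subseteq> K \<and>
        inner_verts (P e) \<inter> \<phi> ` cbt_verts k = {}) \<and>
     (\<forall>e\<in>cbt_edges k. \<forall>e'\<in>cbt_edges k. e \<noteq> e' \<longrightarrow> inner_verts (P e) \<inter> inner_verts (P e') = {})"

lemma cbt_embeddingD:
  assumes "cbt_embedding V E k K \<phi> P"
  shows "inj_on \<phi> (cbt_verts k)" "xs \<in> cbt_verts k \<Longrightarrow> \<phi> xs \<in> K"
    "e \<in> cbt_edges k \<Longrightarrow> is_path V E (P e)" "e \<in> cbt_edges k \<Longrightarrow> {hd (P e), last (P e)} = \<phi> ` e"
    "e \<in> cbt_edges k \<Longrightarrow> set (P e) \<subseteq> K"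
    "e \<in> cbt_edges k \<Longrightarrow> inner_verts (P e) \<inter> \<phi> ` cbt_verts k = {}"
    "e \<in> cbt_edges k \<Longrightarrow> e' \<in> cbt_edges k \<Longrightarrow> e \<noteq> e' \<Longrightarrow> inner_verts (P e) \<inter> inner_verts (P e') = {}"
  using assms unfolding cbt_embedding_def by (simp_all add: image_subset_iff)

lemma cbt_embedding_mono: "cbt_embedding V E k K \<phi> P \<Longrightarrow> K \<subseteq> K' \<Longrightarrow> cbt_embedding V E k K' \<phi> P"
  unfolding cbt_embedding_def by (meson subset_trans)

lemma contains_subdivision_cbt_embedding:
  assumes emb: "cbt_embedding V E k K \<phi> P" and "K \<subseteq> V"
  shows "contains_subdivision (cbt_verts k) (cbt_edges k) V E"
proof -
  have "\<phi> ` cbt_verts k \<subseteq> V" using cbt_embeddingD(2)[OF emb] assms(2) by blast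
  then show ?thesis unfolding contains_subdivision_def
    by (intro exI[of _ \<phi>] exI[of _ P] conjI ballI impI cbt_embeddingD[OF emb]) auto
qed

lemma cbt_embedding_0:
  assumes "s \<in> K"
  shows "cbt_embedding V E 0 K (\<lambda>_. s) (\<lambda>_. [s])"
proof -
  have "cbt_verts 0 = {[]}" "cbt_edges 0 = {}" unfolding cbt_verts_def cbt_edges_def by auto
  then show ?thesis using assms unfolding cbt_embedding_def by simp
qed

text \<open>The words of \<open>T\<^sub>k\<^sub>+\<^sub>1\<close> ending in \<open>b\<close> form a copy of \<open>T\<^sub>k\<close> (forget the last letter). Two
  embeddings \<open>\<Phi> b\<close> of \<open>T\<^sub>k\<close> are joined below a new root \<open>s\<close> by mapping copy \<open>b\<close> with \<open>\<Phi> b\<close> and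
  routing the edge \<open>{[], [b]}\<close> along a path \<open>UP b\<close> from \<open>\<Phi> b []\<close> to \<open>s\<close>.\<close>
definition cbt_join_map :: "'n \<Rightarrow> (bool \<Rightarrow> bool list \<Rightarrow> 'n) \<Rightarrow> bool list \<Rightarrow> 'n" where
  "cbt_join_map s \<Phi> xs = (if xs = [] then s else \<Phi> (last xs) (butlast xs))"

definition cbt_join_paths ::
  "(bool \<Rightarrow> 'n list) \<Rightarrow> (bool \<Rightarrow> bool list set \<Rightarrow> 'n list) \<Rightarrow> bool list set \<Rightarrow> 'n list" where
  "cbt_join_paths UP PP e =
     (if \<exists>b. e = {[], [b]} then UP (THE b. e = {[], [b]}) else PP (last (SOME xs. xs \<in> e)) (butlast ` e))"

lemma cbt_join_map_Nil: "cbt_join_map s \<Phi> [] = s"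
  unfolding cbt_join_map_def by simp

lemma cbt_join_map_snoc: "cbt_join_map s \<Phi> (ys @ [b]) = \<Phi> b ys"
  unfolding cbt_join_map_def by simp

lemma cbt_join_paths_root: "cbt_join_paths UP PP {[], [b]} = UP b"
proof -
  have "(THE b'. {[], [b]} = {[], [b']}) = b"
    by (rule the_equality) (auto simp: doubleton_eq_iff)
  then show ?thesis unfolding cbt_join_paths_def by auto
qed

lemma cbt_join_paths_lift:
  assumes "e \<in> cbt_edges k"
  shows "cbt_join_paths UP PP ((\<lambda>ys. ys @ [b]) ` e) = PP b e"
proof -
  obtain xs c where e: "e = {xs, c # xs}" using assms unfolding cbt_edges_def by auto
  let ?e = "(\<lambda>ys. ys @ [b]) ` e"
  have "\<not> (\<exists>b'. ?e = {[], [b']})" using e by (auto simp: doubleton_eq_iff)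
  moreover have "(SOME x. x \<in> ?e) \<in> ?e" by (rule someI_ex) (use e in auto)
  then have "last (SOME x. x \<in> ?e) = b" by auto
  moreover have "butlast ` ?e = e" by (simp add: image_image)
  ultimately show ?thesis unfolding cbt_join_paths_def by simp
qed

context
  fixes V :: "'n set" and E :: "'n set set" and k :: nat and s :: 'n and R K :: "bool \<Rightarrow> 'n set"
    and \<Phi> :: "bool \<Rightarrow> bool list \<Rightarrow> 'n" and PP :: "bool \<Rightarrow> bool list set \<Rightarrow> 'n list"
    and UP :: "bool \<Rightarrow> 'n list"
  assumes emb: "\<And>b. cbt_embedding V E k (K b) (\<Phi> b) (PP b)"
    and core: "\<And>b. K b \<subseteq> R b"
    and regions_disjoint: "R True \<inter> R False = {}"
    and root_outside: "\<And>b. s \<notin> R b"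
    and up_path: "\<And>b. is_path V E (UP b) \<and> hd (UP b) = \<Phi> b [] \<and> last (UP b) = s"
    and up_region: "\<And>b. set (UP b) \<subseteq> insert s (R b)"
    and up_leaves_core: "\<And>b. inner_verts (UP b) \<inter> K b = {}"
begin

private lemma region_unique: "y \<in> R b \<Longrightarrow> y \<in> R b' \<Longrightarrow> b = b'"
  using regions_disjoint by (cases b; cases b') auto

private lemma image_in_region: "ys \<in> cbt_verts k \<Longrightarrow> \<Phi> b ys \<in> R b"
  using cbt_embeddingD(2)[OF emb[of b]] core[of b] by blast

private lemma join_map_cases:
  assumes "z \<in> cbt_verts (Suc k)"
  obtains "z = []" "cbt_join_map s \<Phi> z = s"
  | zs b where "z = zs @ [b]" "zs \<in> cbt_verts k" "cbt_join_map s \<Phi> z = \<Phi> b zs" "\<Phi> b zs \<in> R b"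
  using assms image_in_region unfolding cbt_verts_Suc by (auto simp: cbt_join_map_Nil cbt_join_map_snoc)

private lemma join_inj: "inj_on (cbt_join_map s \<Phi>) (cbt_verts (Suc k))"
proof (rule inj_onI)
  fix x y assume x: "x \<in> cbt_verts (Suc k)" and y: "y \<in> cbt_verts (Suc k)"
    and eq: "cbt_join_map s \<Phi> x = cbt_join_map s \<Phi> y"
  show "x = y"
  proof (cases rule: join_map_cases[OF x])
    case 1
    then show ?thesis using eq root_outside by (cases rule: join_map_cases[OF y]) auto
  next
    case x': (2 xs b)
    show ?thesis
    proof (cases rule: join_map_cases[OF y])
      case 1
      then show ?thesis using x' eq root_outside by auto
    next
      case (2 ys b')
      then have "b = b'" using x' eq region_unique by auto
      then show ?thesis using x' 2 eq inj_onD[OF cbt_embeddingD(1)[OF emb[of b]]] by auto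
    qed
  qed
qed

private lemma join_image: "cbt_join_map s \<Phi> ` cbt_verts (Suc k) \<subseteq> insert s (R True \<union> R False)"
proof
  fix z assume "z \<in> cbt_join_map s \<Phi> ` cbt_verts (Suc k)"
  then obtain x where x: "x \<in> cbt_verts (Suc k)" "z = cbt_join_map s \<Phi> x" by blast
  show "z \<in> insert s (R True \<union> R False)"
  proof (cases rule: join_map_cases[OF x(1)])
    case (2 zs b)
    then show ?thesis using x(2) by (cases b) auto
  qed (use x in simp)
qed

private lemma up_inner_region: "y \<in> inner_verts (UP b) \<Longrightarrow> y \<in> R b - K b"
  using up_path[of b] up_region[of b] up_leaves_core[of b] inner_verts_subset[of "UP b"]
    inner_verts_not_ends[of "UP b" y] unfolding is_path_def by blast

private lemma join_inner_cases:
  assumes "e \<in> cbt_edges (Suc k)" "y \<in> inner_verts (cbt_join_paths UP PP e)"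
  obtains b where "e = {[], [b]}" "y \<in> R b - K b"
  | b e' where "e' \<in> cbt_edges k" "e = (\<lambda>ys. ys @ [b]) ` e'" "y \<in> inner_verts (PP b e')" "y \<in> K b"
proof (cases rule: cbt_edges_SucE[OF assms(1)])
  case (1 b)
  then have "y \<in> inner_verts (UP b)" using assms(2) by (simp add: cbt_join_paths_root)
  then show thesis by (rule that(1)[OF 1 up_inner_region])
next
  case (2 b e')
  then have y: "y \<in> inner_verts (PP b e')" using assms(2) by (simp add: cbt_join_paths_lift)
  have "y \<in> K b" using y inner_verts_subset[of "PP b e'"] cbt_embeddingD(5)[OF emb[of b] 2(1)] by blast
  then show thesis by (rule that(2)[OF 2 y])
qed

private lemma join_path:
  assumes e: "e \<in> cbt_edges (Suc k)"
  shows "is_path V E (cbt_join_paths UP PP e) \<and>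
    {hd (cbt_join_paths UP PP e), last (cbt_join_paths UP PP e)} = cbt_join_map s \<Phi> ` e \<and>
    set (cbt_join_paths UP PP e) \<subseteq> insert s (R True \<union> R False)"
proof (cases rule: cbt_edges_SucE[OF e])
  case (1 b)
  have "set (UP b) \<subseteq> insert s (R True \<union> R False)" using up_region[of b] by (cases b) auto
  then show ?thesis using 1 up_path[of b] cbt_join_map_snoc[of s \<Phi> "[]" b]
    by (simp add: cbt_join_paths_root cbt_join_map_Nil insert_commute)
next
  case (2 b e')
  have "set (PP b e') \<subseteq> insert s (R True \<union> R False)"
    using cbt_embeddingD(5)[OF emb[of b] 2(1)] core[of b] by (cases b) auto
  moreover have "cbt_join_map s \<Phi> ` e = \<Phi> b ` e'" using 2(2) by (simp add: image_image cbt_join_map_snoc)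
  ultimately show ?thesis using 2 cbt_embeddingD(3,4)[OF emb[of b] 2(1)] by (simp add: cbt_join_paths_lift)
qed

private lemma join_inner_avoids_image:
  assumes e: "e \<in> cbt_edges (Suc k)" and y: "y \<in> inner_verts (cbt_join_paths UP PP e)"
    and x: "x \<in> cbt_verts (Suc k)" "y = cbt_join_map s \<Phi> x"
  shows False
proof (cases rule: join_map_cases[OF x(1)])
  case 1
  have "\<exists>b. y \<in> R b"
    by (cases rule: join_inner_cases[OF e y]) (use core in blast)+
  then show False using 1 x(2) root_outside by auto
next
  case (2 zs b')
  then have y': "y = \<Phi> b' zs" "y \<in> K b'" "y \<in> R b'"
    using x(2) cbt_embeddingD(2)[OF emb[of b']] by auto
  show False
  proof (cases rule: join_inner_cases[OF e y])
    case (1 b)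
    then have "b' = b" using y' region_unique[of y b' b] by blast
    then show False using 1 y' by simp
  next
    case (2 b e')
    then have "b' = b" using y' core[of b] region_unique[of y b' b] by blast
    then have "y \<in> \<Phi> b ` cbt_verts k" using y' \<open>zs \<in> cbt_verts k\<close> by simp
    then show False using 2 cbt_embeddingD(6)[OF emb[of b] 2(1)] by blast
  qed
qed

private lemma join_inner_disjoint:
  assumes e: "e \<in> cbt_edges (Suc k)" "y \<in> inner_verts (cbt_join_paths UP PP e)"
    and e': "e' \<in> cbt_edges (Suc k)" "y \<in> inner_verts (cbt_join_paths UP PP e')"
  shows "e = e'"
proof (cases rule: join_inner_cases[OF e])
  case A: (1 b)
  show ?thesis
  proof (cases rule: join_inner_cases[OF e'])
    case (1 b')
    then show ?thesis using A region_unique[of y b b'] by blast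
  next
    case (2 b' e2)
    then show ?thesis using A core[of b'] region_unique[of y b b'] by blast
  qed
next
  case A: (2 b e1)
  show ?thesis
  proof (cases rule: join_inner_cases[OF e'])
    case (1 b')
    then show ?thesis using A core[of b] region_unique[of y b b'] by blast
  next
    case (2 b' e2)
    then have "b' = b" using A core[of b] core[of b'] region_unique[of y b b'] by blast
    then show ?thesis using A 2 cbt_embeddingD(7)[OF emb[of b] A(1) 2(1)] by blast
  qed
qed

lemma cbt_embedding_join:
  "cbt_embedding V E (Suc k) (insert s (R True \<union> R False)) (cbt_join_map s \<Phi>) (cbt_join_paths UP PP)"
  unfolding cbt_embedding_def
proof (intro conjI ballI impI)
  fix e assume e: "e \<in> cbt_edges (Suc k)"
  show "is_path V E (cbt_join_paths UP PP e)"
    "{hd (cbt_join_paths UP PP e), last (cbt_join_paths UP PP e)} = cbt_join_map s \<Phi> ` e"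
    "set (cbt_join_paths UP PP e) \<subseteq> insert s (R True \<union> R False)"
    using join_path[OF e] by simp_all
  show "inner_verts (cbt_join_paths UP PP e) \<inter> cbt_join_map s \<Phi> ` cbt_verts (Suc k) = {}"
    using join_inner_avoids_image[OF e] by blast
next
  fix e e' assume "e \<in> cbt_edges (Suc k)" "e' \<in> cbt_edges (Suc k)" "e \<noteq> e'"
  then show "inner_verts (cbt_join_paths UP PP e) \<inter> inner_verts (cbt_join_paths UP PP e') = {}"
    using join_inner_disjoint by blast
qed (use join_inj join_image in simp_all)

end

section \<open>Rooted forests\<close>

text \<open>\<open>Q\<close> is the set of non-root nodes, and \<open>dep\<close> decreases towards the roots, which rules out cycles.\<close>
locale rooted_forest =
  fixes N :: "'n set" and Q :: "'n set" and par :: "'n \<Rightarrow> 'n" and dep :: "'n \<Rightarrow> nat"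
  assumes finite_nodes: "finite N" and nonroots_subset: "Q \<subseteq> N"
    and parent_in_nodes: "y \<in> Q \<Longrightarrow> par y \<in> N" and dep_parent_less: "y \<in> Q \<Longrightarrow> dep (par y) < dep y"
begin

definition parent_rel :: "('n \<times> 'n) set" where
  "parent_rel = {(y, par y) | y. y \<in> Q}"

definition subtree :: "'n \<Rightarrow> 'n set" where
  "subtree s = {t \<in> N. (t, s) \<in> parent_rel\<^sup>*}"

definition children :: "'n \<Rightarrow> 'n set" where
  "children s = {c \<in> Q. par c = s}"

definition forest_edges :: "'n set set" where
  "forest_edges = {{y, par y} | y. y \<in> Q}"

lemma parent_rel_iff: "(a, b) \<in> parent_rel \<longleftrightarrow> a \<in> Q \<and> b = par a"
  unfolding parent_rel_def by auto

lemma children_iff: "c \<in> children s \<longleftrightarrow> c \<in> Q \<and> par c = s"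
  unfolding children_def by auto

lemma dep_less_ancestor: "(a, b) \<in> parent_rel\<^sup>+ \<Longrightarrow> dep b < dep a"
  by (induction rule: trancl_induct) (auto simp: parent_rel_iff dest: dep_parent_less)

lemma ancestor_in_nodes: "(a, b) \<in> parent_rel\<^sup>* \<Longrightarrow> a \<in> N \<Longrightarrow> b \<in> N"
  by (induction rule: rtrancl_induct) (auto simp: parent_rel_iff dest: parent_in_nodes)

lemma ancestor_antisym: "(a, b) \<in> parent_rel\<^sup>* \<Longrightarrow> (b, a) \<in> parent_rel\<^sup>* \<Longrightarrow> a = b"
proof (rule ccontr)
  assume "(a, b) \<in> parent_rel\<^sup>*" "(b, a) \<in> parent_rel\<^sup>*" "a \<noteq> b"
  then have "(a, a) \<in> parent_rel\<^sup>+" by (simp add: rtrancl_eq_or_trancl)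
  then show False using dep_less_ancestor by fastforce
qed

lemma ancestors_comparable:
  assumes "(y, a) \<in> parent_rel\<^sup>*" "(y, b) \<in> parent_rel\<^sup>*"
  shows "(a, b) \<in> parent_rel\<^sup>* \<or> (b, a) \<in> parent_rel\<^sup>*"
proof -
  have "single_valued parent_rel" unfolding single_valued_def parent_rel_def by auto
  then show ?thesis using single_valued_confluent[of parent_rel y a b] assms by blast
qed

lemma parent_not_below_child:
  assumes "c \<in> children s"
  shows "(s, c) \<notin> parent_rel\<^sup>*"
proof
  assume "(s, c) \<in> parent_rel\<^sup>*"
  moreover have "(c, s) \<in> parent_rel\<^sup>*" using assms by (auto simp: children_iff parent_rel_iff)
  ultimately have "c = s" by (rule ancestor_antisym[rotated])
  then show False using assms dep_parent_less[of c] by (simp add: children_iff)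
qed

lemma ancestor_of_child:
  assumes "c \<in> children s" "(c, t) \<in> parent_rel\<^sup>*" "c \<noteq> t"
  shows "(s, t) \<in> parent_rel\<^sup>*"
  using assms(2)
proof (cases rule: converse_rtranclE)
  case (step z)
  then show ?thesis using assms(1) by (auto simp: parent_rel_iff children_iff)
qed (use assms(3) in simp)

lemma subtree_self: "s \<in> N \<Longrightarrow> s \<in> subtree s"
  unfolding subtree_def by auto

lemma subtree_subset: "subtree s \<subseteq> N"
  unfolding subtree_def by auto

lemma subtree_trans: "t \<in> subtree c \<Longrightarrow> subtree t \<subseteq> subtree c"
  unfolding subtree_def by auto

lemma subtree_child: "c \<in> children s \<Longrightarrow> subtree c \<subseteq> subtree s"
  unfolding subtree_def by (auto simp: children_iff parent_rel_iff intro: rtrancl_into_rtrancl)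

lemma parent_notin_subtree_child: "c \<in> children s \<Longrightarrow> s \<notin> subtree c"
  using parent_not_below_child unfolding subtree_def by blast

lemma subtrees_children_disjoint:
  assumes "c1 \<in> children s" "c2 \<in> children s" "c1 \<noteq> c2"
  shows "subtree c1 \<inter> subtree c2 = {}"
proof -
  have "(c1, c2) \<notin> parent_rel\<^sup>*" if "c1 \<in> children s" "c2 \<in> children s" "c1 \<noteq> c2" for c1 c2
    using ancestor_of_child[OF that(1) _ that(3)] parent_not_below_child[OF that(2)] by blast
  then show ?thesis
    using assms ancestors_comparable unfolding subtree_def by blast
qed

lemma subtree_decomp: "s \<in> N \<Longrightarrow> subtree s = insert s (\<Union>c\<in>children s. subtree c)"
proof (intro equalityI subsetI)
  fix t assume t: "t \<in> subtree s"
  show "t \<in> insert s (\<Union>c\<in>children s. subtree c)"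
  proof (cases "t = s")
    case False
    with t have "(t, s) \<in> parent_rel\<^sup>+" "t \<in> N" unfolding subtree_def by (auto simp: rtrancl_eq_or_trancl)
    then obtain c where "(t, c) \<in> parent_rel\<^sup>*" "(c, s) \<in> parent_rel" by (meson tranclD2)
    then show ?thesis using \<open>t \<in> N\<close> unfolding subtree_def children_def by (auto simp: parent_rel_iff)
  qed simp
qed (use subtree_child subtree_self in blast)+

lemma subtree_parent:
  assumes "t \<in> subtree c" "t \<noteq> c"
  shows "t \<in> Q" "par t \<in> subtree c"
proof -
  from assms have "(t, c) \<in> parent_rel\<^sup>+" "t \<in> N" unfolding subtree_def by (auto simp: rtrancl_eq_or_trancl)
  then obtain z where "(t, z) \<in> parent_rel" "(z, c) \<in> parent_rel\<^sup>*" by (meson tranclD)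
  then show "t \<in> Q" "par t \<in> subtree c" unfolding subtree_def by (auto simp: parent_rel_iff dest: parent_in_nodes)
qed

lemma child_in_subtree: "t \<in> Q \<Longrightarrow> par t \<in> subtree c \<Longrightarrow> t \<in> subtree c"
  unfolding subtree_def using nonroots_subset
  by (auto simp: parent_rel_iff intro: converse_rtrancl_into_rtrancl)

lemma in_subtree_of_root: "t \<in> N \<Longrightarrow> \<exists>s\<in>N - Q. t \<in> subtree s"
proof (induction "dep t" arbitrary: t rule: less_induct)
  case less
  show ?case
  proof (cases "t \<in> Q")
    case True
    then obtain s where "s \<in> N - Q" "par t \<in> subtree s"
      using less dep_parent_less parent_in_nodes by blast
    then show ?thesis using child_in_subtree True by blast
  qed (use less subtree_self in blast)
qed

lemma subtrees_roots_disjoint: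
  "s1 \<in> N - Q \<Longrightarrow> s2 \<in> N - Q \<Longrightarrow> s1 \<noteq> s2 \<Longrightarrow> subtree s1 \<inter> subtree s2 = {}"
proof (rule ccontr)
  assume s: "s1 \<in> N - Q" "s2 \<in> N - Q" "s1 \<noteq> s2" and "subtree s1 \<inter> subtree s2 \<noteq> {}"
  then obtain y where "(y, s1) \<in> parent_rel\<^sup>*" "(y, s2) \<in> parent_rel\<^sup>*" unfolding subtree_def by auto
  then have "(s1, s2) \<in> parent_rel\<^sup>* \<or> (s2, s1) \<in> parent_rel\<^sup>*" by (rule ancestors_comparable)
  then show False using s by (auto simp: parent_rel_iff elim: converse_rtranclE)
qed

lemma path_to_ancestor:
  "(a, b) \<in> parent_rel\<^sup>* \<Longrightarrow> a \<in> N \<Longrightarrow> \<exists>ps. is_path N forest_edges ps \<and> hd ps = a \<and> last ps = b \<and>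
     (\<forall>y\<in>set ps. (a, y) \<in> parent_rel\<^sup>* \<and> (y, b) \<in> parent_rel\<^sup>*)"
proof (induction rule: converse_rtrancl_induct)
  case base
  then show ?case by (intro exI[of _ "[b]"]) (auto simp: is_path_def)
next
  case (step y z)
  then have yz: "y \<in> Q" "z = par y" by (auto simp: parent_rel_iff)
  with step obtain ps where ps: "is_path N forest_edges ps" "hd ps = z" "last ps = b"
    "\<forall>w\<in>set ps. (z, w) \<in> parent_rel\<^sup>* \<and> (w, b) \<in> parent_rel\<^sup>*"
    using parent_in_nodes by blast
  have "y \<notin> set ps"
    using ps(4) step(1) ancestor_antisym[of z y] dep_parent_less[OF yz(1)] yz(2) by fastforce
  then have "is_path N forest_edges (y # ps)"
    using ps step yz unfolding forest_edges_def by (intro is_path_Cons) auto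
  moreover have "last (y # ps) = b" using ps by (auto simp: is_path_def)
  moreover have "\<forall>w\<in>set (y # ps). (y, w) \<in> parent_rel\<^sup>* \<and> (w, b) \<in> parent_rel\<^sup>*"
    using ps step by (auto intro: converse_rtrancl_into_rtrancl)
  ultimately show ?case by (intro exI[of _ "y # ps"]) auto
qed

lemma ancestor_path_region:
  assumes "c \<in> children s" "t \<in> subtree c" "(t, y) \<in> parent_rel\<^sup>*" "(y, s) \<in> parent_rel\<^sup>*"
  shows "y = s \<or> y \<in> subtree c"
proof -
  have t: "t \<in> N" "(t, c) \<in> parent_rel\<^sup>*" using assms(2) unfolding subtree_def by auto
  have "y \<in> N" using ancestor_in_nodes[OF assms(3) t(1)] .
  from ancestors_comparable[OF assms(3) t(2)] show ?thesis
  proof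
    assume "(y, c) \<in> parent_rel\<^sup>*"
    then show ?thesis using \<open>y \<in> N\<close> unfolding subtree_def by blast
  next
    assume "(c, y) \<in> parent_rel\<^sup>*"
    then show ?thesis
      using ancestor_of_child[OF assms(1)] ancestor_antisym[OF assms(4)] subtree_self[OF \<open>y \<in> N\<close>] by blast
  qed
qed

lemma parent_edge_cases:
  assumes "y \<in> Q" "y \<in> A \<union> subtree c" "par y \<in> A \<union> subtree c" "A \<inter> subtree c = {}"
  obtains "y \<in> A" "par y \<in> A" | "y \<in> subtree c" "par y \<in> subtree c" | "y = c"
proof (cases "y \<in> subtree c")
  case True
  then show thesis using that(2,3) subtree_parent(2)[OF True] by blast
next
  case False
  then show thesis using that(1) assms child_in_subtree[OF assms(1), of c] by blast
qed

inductive has_cbt :: "nat \<Rightarrow> 'n \<Rightarrow> bool" where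
  leaf: "s \<in> N \<Longrightarrow> has_cbt 0 s"
| lift: "c \<in> Q \<Longrightarrow> has_cbt k c \<Longrightarrow> has_cbt k (par c)"
| join: "c1 \<in> Q \<Longrightarrow> c2 \<in> Q \<Longrightarrow> c1 \<noteq> c2 \<Longrightarrow> par c1 = par c2 \<Longrightarrow> has_cbt k c1 \<Longrightarrow> has_cbt k c2 \<Longrightarrow>
    has_cbt (Suc k) (par c1)"

lemma has_cbt_parent: "has_cbt k c \<Longrightarrow> c \<in> children s \<Longrightarrow> has_cbt k s"
  using has_cbt.lift[of c k] by (auto simp: children_iff)

lemma at_most_one_child_has_cbt:
  "\<not> has_cbt (Suc k) s \<Longrightarrow> c1 \<in> children s \<Longrightarrow> c2 \<in> children s \<Longrightarrow> has_cbt k c1 \<Longrightarrow> has_cbt k c2 \<Longrightarrow>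
     c1 = c2"
  using has_cbt.join[of c1 c2 k] by (auto simp: children_iff)

lemma card_subtree_child_less:
  assumes "s \<in> N" "c \<in> children s"
  shows "card (subtree c) < card (subtree s)"
proof -
  have "subtree c \<subset> subtree s"
    using subtree_child[OF assms(2)] parent_notin_subtree_child[OF assms(2)] subtree_self[OF assms(1)] by blast
  then show ?thesis using finite_subset[OF subtree_subset finite_nodes] by (rule psubset_card_mono[rotated])
qed

lemma path_from_descendant:
  assumes "c \<in> children s" "t \<in> subtree c"
  obtains ps where "is_path N forest_edges ps" "hd ps = t" "last ps = s"
    "set ps \<subseteq> insert s (subtree c)" "inner_verts ps \<inter> subtree t = {}"
proof -
  have t: "t \<in> N" "(t, c) \<in> parent_rel\<^sup>*" using assms(2) unfolding subtree_def by auto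
  moreover have "(c, s) \<in> parent_rel" using assms(1) by (simp add: children_iff parent_rel_iff)
  ultimately obtain ps where ps: "is_path N forest_edges ps" "hd ps = t" "last ps = s"
    "\<forall>y\<in>set ps. (t, y) \<in> parent_rel\<^sup>* \<and> (y, s) \<in> parent_rel\<^sup>*"
    using path_to_ancestor[of t s] by (meson rtrancl_into_rtrancl)
  have "set ps \<subseteq> insert s (subtree c)"
    using ps(4) ancestor_path_region[OF assms] by blast
  moreover have "inner_verts ps \<inter> subtree t = {}"
  proof -
    have "y = t" if "y \<in> set ps" "y \<in> subtree t" for y
      using that ps(4) ancestor_antisym[of y t] unfolding subtree_def by blast
    then show ?thesis
      using inner_verts_subset[of ps] inner_verts_not_ends(1)[of ps] ps(1,2) unfolding is_path_def by blast
  qed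
  ultimately show thesis using that ps(1-3) by blast
qed

lemma cbt_embedding_below_children:
  assumes C: "\<And>b. C b \<in> children s" and dif: "C True \<noteq> C False"
    and emb: "\<And>b. \<Phi> b [] \<in> subtree (C b) \<and> cbt_embedding N forest_edges k (subtree (\<Phi> b [])) (\<Phi> b) (PP b)"
  shows "\<exists>\<phi> P. \<phi> [] = s \<and> cbt_embedding N forest_edges (Suc k) (subtree s) \<phi> P"
proof -
  have "\<forall>b. \<exists>ps. is_path N forest_edges ps \<and> hd ps = \<Phi> b [] \<and> last ps = s \<and>
      set ps \<subseteq> insert s (subtree (C b)) \<and> inner_verts ps \<inter> subtree (\<Phi> b []) = {}"
    using path_from_descendant[OF C] emb by metis
  then obtain UP where UP: "\<And>b. is_path N forest_edges (UP b) \<and> hd (UP b) = \<Phi> b [] \<and> last (UP b) = s"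
    "\<And>b. set (UP b) \<subseteq> insert s (subtree (C b))" "\<And>b. inner_verts (UP b) \<inter> subtree (\<Phi> b []) = {}"
    by metis
  have "cbt_embedding N forest_edges (Suc k) (insert s (subtree (C True) \<union> subtree (C False)))
      (cbt_join_map s \<Phi>) (cbt_join_paths UP PP)"
  proof (rule cbt_embedding_join)
    show "subtree (\<Phi> b []) \<subseteq> subtree (C b)" for b using emb subtree_trans by blast
    show "subtree (C True) \<inter> subtree (C False) = {}"
      using subtrees_children_disjoint[OF C C dif] .
    show "s \<notin> subtree (C b)" for b using parent_notin_subtree_child[OF C] .
  qed (use emb UP in blast)+
  moreover have "s \<in> subtree s" using C[of True] parent_in_nodes subtree_self by (auto simp: children_iff)
  moreover have "insert s (subtree (C True) \<union> subtree (C False)) \<subseteq> subtree s"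
    using subtree_child[OF C] \<open>s \<in> subtree s\<close> by blast
  ultimately show ?thesis using cbt_embedding_mono cbt_join_map_Nil by metis
qed

lemma has_cbt_embedding:
  "has_cbt k s \<Longrightarrow> \<exists>\<phi> P. \<phi> [] \<in> subtree s \<and> cbt_embedding N forest_edges k (subtree (\<phi> [])) \<phi> P"
proof (induction rule: has_cbt.induct)
  case (leaf s)
  then show ?case using cbt_embedding_0 subtree_self by fastforce
next
  case (lift c k)
  then show ?case using subtree_child[of c "par c"] by (auto simp: children_iff)
next
  case (join c1 c2 k)
  define C where "C b = (if b then c1 else c2)" for b
  obtain \<phi>1 P1 \<phi>2 P2 where
    "\<phi>1 [] \<in> subtree c1" "cbt_embedding N forest_edges k (subtree (\<phi>1 [])) \<phi>1 P1"
    "\<phi>2 [] \<in> subtree c2" "cbt_embedding N forest_edges k (subtree (\<phi>2 [])) \<phi>2 P2"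
    using join.IH by blast
  then have "\<exists>\<phi> P. \<phi> [] = par c1 \<and> cbt_embedding N forest_edges (Suc k) (subtree (par c1)) \<phi> P"
    using join.hyps by (intro cbt_embedding_below_children[where C = C and \<Phi> = "\<lambda>b. if b then \<phi>1 else \<phi>2"
        and PP = "\<lambda>b. if b then P1 else P2"]) (auto simp: C_def children_iff)
  then show ?case using join.hyps(1) parent_in_nodes subtree_self by metis
qed

lemma contains_subdivision_has_cbt:
  "has_cbt k s \<Longrightarrow> contains_subdivision (cbt_verts k) (cbt_edges k) N forest_edges"
  using has_cbt_embedding contains_subdivision_cbt_embedding subtree_subset by blast

end

section \<open>Blown-up forests\<close>

text \<open>The graph
  may have further edges, but none inside the blown-up vertex set.\<close>
locale blown_up_forest = rooted_forest N Q par dep for N :: "'n set" and Q par dep +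
  fixes f :: "'n \<Rightarrow> nat \<Rightarrow> 't" and lo hi :: "'n \<Rightarrow> nat" and at cn :: "'n \<Rightarrow> nat" and ET :: "'t set set"
  assumes lo_le_hi: "s \<in> N \<Longrightarrow> lo s \<le> hi s"
    and path_inj: "s \<in> N \<Longrightarrow> inj_on (f s) {lo s..hi s}"
    and paths_disjoint: "s \<in> N \<Longrightarrow> s' \<in> N \<Longrightarrow> i \<in> {lo s..hi s} \<Longrightarrow> i' \<in> {lo s'..hi s'} \<Longrightarrow>
       f s i = f s' i' \<Longrightarrow> s = s'"
    and attach_in_parent: "y \<in> Q \<Longrightarrow> at y \<in> {lo (par y)..hi (par y)}"
    and contact_in_child: "y \<in> Q \<Longrightarrow> cn y \<in> {lo y..hi y}"
    and edges_classified: "e \<in> ET \<Longrightarrow> e \<subseteq> (\<Union>s\<in>N. f s ` {lo s..hi s}) \<Longrightarrow>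
       (\<exists>s i. s \<in> N \<and> lo s \<le> i \<and> Suc i \<le> hi s \<and> e = {f s i, f s (Suc i)}) \<or>
       (\<exists>y\<in>Q. e = {f (par y) (at y), f y (cn y)})"
begin

definition path_verts :: "'n \<Rightarrow> 't set" where
  "path_verts s = f s ` {lo s..hi s}"

definition verts_of :: "'n set \<Rightarrow> 't set" where
  "verts_of A = (\<Union>s\<in>A. path_verts s)"

lemma verts_of_Un: "verts_of (A \<union> B) = verts_of A \<union> verts_of B"
  unfolding verts_of_def by auto

lemma path_vert_in_verts_of: "i \<in> {lo t..hi t} \<Longrightarrow> t \<in> A \<Longrightarrow> f t i \<in> verts_of A"
  unfolding verts_of_def path_verts_def by blast

lemma path_vert_in_verts_ofD: "t \<in> N \<Longrightarrow> i \<in> {lo t..hi t} \<Longrightarrow> B \<subseteq> N \<Longrightarrow> f t i \<in> verts_of B \<Longrightarrow> t \<in> B"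
  unfolding verts_of_def path_verts_def using paths_disjoint by blast

lemma verts_of_disjoint: "A \<subseteq> N \<Longrightarrow> B \<subseteq> N \<Longrightarrow> A \<inter> B = {} \<Longrightarrow> verts_of A \<inter> verts_of B = {}"
  unfolding verts_of_def path_verts_def using paths_disjoint by blast

lemma edge_in_verts_of:
  assumes e: "e \<in> ET" and B: "B \<subseteq> N" "e \<subseteq> verts_of B"
  obtains t i where "t \<in> B" "lo t \<le> i" "Suc i \<le> hi t" "e = {f t i, f t (Suc i)}"
  | y where "y \<in> Q" "y \<in> B" "par y \<in> B" "e = {f (par y) (at y), f y (cn y)}"
proof -
  have "e \<subseteq> (\<Union>s\<in>N. f s ` {lo s..hi s})" using B unfolding verts_of_def path_verts_def by blast
  from edges_classified[OF e this] show thesis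
  proof (elim disjE exE bexE conjE)
    fix t i assume ti: "t \<in> N" "lo t \<le> i" "Suc i \<le> hi t" "e = {f t i, f t (Suc i)}"
    have "i \<in> {lo t..hi t}" "f t i \<in> verts_of B" using ti B(2) by auto
    then show thesis using that(1) ti path_vert_in_verts_ofD[OF ti(1) _ B(1)] by blast
  next
    fix y assume y: "y \<in> Q" "e = {f (par y) (at y), f y (cn y)}"
    have "y \<in> N" "par y \<in> N" using y nonroots_subset parent_in_nodes by auto
    then have "y \<in> B" "par y \<in> B"
      using path_vert_in_verts_ofD contact_in_child[OF y(1)] attach_in_parent[OF y(1)] B y(2) by auto
    then show thesis using that(2) y by blast
  qed
qed

lemma edge_between_parts:
  assumes A: "A \<subseteq> N" and c: "c \<in> N" and disj: "A \<inter> subtree c = {}" and e: "e \<in> ET"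
    and eY: "e \<subseteq> verts_of A \<union> verts_of (subtree c)"
  shows "e \<subseteq> verts_of A \<or> e \<subseteq> verts_of (subtree c) \<or> (c \<in> Q \<and> e = {f (par c) (at c), f c (cn c)})"
proof -
  have B: "A \<union> subtree c \<subseteq> N" "e \<subseteq> verts_of (A \<union> subtree c)"
    using A subtree_subset eY verts_of_Un by auto
  show ?thesis
  proof (cases rule: edge_in_verts_of[OF e B])
    case (1 t i)
    then have "e \<subseteq> verts_of B" if "t \<in> B" for B using that path_vert_in_verts_of[of i t B] path_vert_in_verts_of[of "Suc i" t B] by auto
    then show ?thesis using 1(1) by blast
  next
    case (2 y)
    have "f y (cn y) \<in> verts_of B" "f (par y) (at y) \<in> verts_of B" if "y \<in> B" "par y \<in> B" for B
      using that path_vert_in_verts_of contact_in_child[OF 2(1)] attach_in_parent[OF 2(1)] by blast+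
    then show ?thesis
      by (cases rule: parent_edge_cases[OF 2(1-3) disj]) (use 2(1,4) in auto)
  qed
qed

lemma verts_of_singleton: "verts_of {s} = path_verts s"
  unfolding verts_of_def by simp

text \<open>The layout of a single path: \<open>f s i\<close> occupies the points \<open>i - lo s\<close> and \<open>i - lo s + 1\<close>, except
  that \<open>f s j\<close> is stretched back to the first point and \<open>f s m\<close> forward to the last one. A point
  then meets at most two consecutive vertices besides \<open>f s j\<close> and \<open>f s m\<close>.\<close>
definition node_l :: "'n \<Rightarrow> nat \<Rightarrow> 't \<Rightarrow> nat" where
  "node_l s j u = (let i = the_inv_into {lo s..hi s} (f s) u in if i = j then 0 else i - lo s)"

definition node_r :: "'n \<Rightarrow> nat \<Rightarrow> 't \<Rightarrow> nat" where
  "node_r s m u =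
     (let i = the_inv_into {lo s..hi s} (f s) u in if i = m then hi s - lo s + 1 else min (i - lo s + 1) (hi s - lo s))"

lemma node_lr:
  assumes "s \<in> N" "i \<in> {lo s..hi s}"
  shows "node_l s j (f s i) = (if i = j then 0 else i - lo s)"
    "node_r s m (f s i) = (if i = m then hi s - lo s + 1 else min (i - lo s + 1) (hi s - lo s))"
  using the_inv_into_f_f[OF path_inj[OF assms(1)] assms(2)] unfolding node_l_def node_r_def by simp_all

lemma load_node_layout:
  assumes s: "s \<in> N"
  shows "load (path_verts s) (node_l s j) (node_r s m) t \<le> 4" "load (path_verts s) (node_l s j) (node_r s m) 0 \<le> 3"
proof -
  have load_le: "load (path_verts s) (node_l s j) (node_r s m) t \<le> card T"
    if "\<And>i. i \<in> {lo s..hi s} \<Longrightarrow> node_l s j (f s i) \<le> t \<Longrightarrow> t \<le> node_r s m (f s i) \<Longrightarrow> i \<in> T" "finite T"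
    for t T
  proof -
    have "{u \<in> path_verts s. node_l s j u \<le> t \<and> t \<le> node_r s m u} \<subseteq> f s ` T"
      using that(1) unfolding path_verts_def by auto
    then have "load (path_verts s) (node_l s j) (node_r s m) t \<le> card (f s ` T)"
      unfolding load_def using that(2) by (intro card_mono) auto
    also have "\<dots> \<le> card T" by (rule card_image_le[OF that(2)])
    finally show ?thesis .
  qed
  have "load (path_verts s) (node_l s j) (node_r s m) t \<le> card {lo s + t, lo s + t - 1, j, m}"
    by (rule load_le) (auto simp: node_lr[OF s] split: if_splits)
  also have "\<dots> \<le> 4" by (auto simp: card_insert_if)
  finally show "load (path_verts s) (node_l s j) (node_r s m) t \<le> 4" .
  have "load (path_verts s) (node_l s j) (node_r s m) 0 \<le> card {lo s, j, m}"
    by (rule load_le) (auto simp: node_lr[OF s] split: if_splits)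
  also have "\<dots> \<le> 3" by (auto simp: card_insert_if)
  finally show "load (path_verts s) (node_l s j) (node_r s m) 0 \<le> 3" .
qed

lemma node_layout:
  assumes s: "s \<in> N" and j: "j \<in> {lo s..hi s}" and m: "m \<in> {lo s..hi s}"
  shows "layout ET 4 (path_verts s) (hi s - lo s + 2) (node_l s j) (node_r s m)"
    "node_l s j (f s j) = 0" "node_r s m (f s m) = hi s - lo s + 1"
proof -
  show "node_l s j (f s j) = 0" "node_r s m (f s m) = hi s - lo s + 1" using node_lr[OF s] j m by simp_all
  show "layout ET 4 (path_verts s) (hi s - lo s + 2) (node_l s j) (node_r s m)"
    unfolding layout_def
  proof (intro conjI ballI allI impI)
    show "finite (path_verts s)" "0 < hi s - lo s + 2" unfolding path_verts_def by simp_all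
    show "node_l s j u \<le> node_r s m u" "node_r s m u < hi s - lo s + 2" if "u \<in> path_verts s" for u
      using that node_lr[OF s] unfolding path_verts_def by auto
    show "load (path_verts s) (node_l s j) (node_r s m) t \<le> 4" for t by (rule load_node_layout[OF s])
  next
    fix e assume e: "e \<in> ET" "e \<subseteq> path_verts s"
    then have B: "{s} \<subseteq> N" "e \<subseteq> verts_of {s}" using s verts_of_singleton by auto
    show "\<exists>t. \<forall>u\<in>e. node_l s j u \<le> t \<and> t \<le> node_r s m u"
    proof (cases rule: edge_in_verts_of[OF e(1) B])
      case (1 t i)
      then have "i \<in> {lo s..hi s}" "Suc i \<in> {lo s..hi s}" by auto
      then show ?thesis using 1 node_lr[OF s] by (intro exI[of _ "Suc i - lo s"]) auto
    next
      case (2 y)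
      then show ?thesis using dep_parent_less[OF 2(1)] by simp
    qed
  qed
qed

text \<open>Load at most 3 at the first point leaves room for the edge to the parent when the layout is
  appended behind the path of the parent (\<open>spine_layout_add_heavy\<close>).\<close>
definition anchored_layout :: "nat \<Rightarrow> 't set \<Rightarrow> 't \<Rightarrow> bool" where
  "anchored_layout W Y p \<longleftrightarrow> (\<exists>n l r. layout ET W Y n l r \<and> load Y l r 0 \<le> 3 \<and> l p = 0)"

text \<open>A layout of the vertices of \<open>A\<close> that starts with \<open>f s j\<close> and in which every vertex of the path
  of \<open>s\<close> meets a point of load at most 4; light subtrees below \<open>s\<close> are inserted at such points.\<close>
definition spine_layout :: "nat \<Rightarrow> 'n \<Rightarrow> nat \<Rightarrow> 'n set \<Rightarrow> bool" where
  "spine_layout W s j A \<longleftrightarrow> (\<exists>n l r. layout ET W (verts_of A) n l r \<and> load (verts_of A) l r 0 \<le> 3 \<and>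
     l (f s j) = 0 \<and> (\<forall>i\<in>{lo s..hi s}. \<exists>t<n. l (f s i) \<le> t \<and> t \<le> r (f s i) \<and> load (verts_of A) l r t \<le> 4))"

lemma anchored_layout_spine: "spine_layout W s j A \<Longrightarrow> anchored_layout W (verts_of A) (f s j)"
  unfolding spine_layout_def anchored_layout_def by blast

lemma spine_layout_node:
  assumes "s \<in> N" "j \<in> {lo s..hi s}" "4 \<le> W"
  shows "spine_layout W s j {s}"
proof -
  obtain n l r where L: "layout ET 4 (path_verts s) n l r" "load (path_verts s) l r 0 \<le> 3" "l (f s j) = 0"
    using node_layout[OF assms(1,2,2)] load_node_layout(2)[OF assms(1)] by blast
  have "\<exists>t<n. l (f s i) \<le> t \<and> t \<le> r (f s i) \<and> load (path_verts s) l r t \<le> 4" if "i \<in> {lo s..hi s}" for i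
    using layout_point[OF L(1)] that unfolding path_verts_def by blast
  then show ?thesis
    unfolding spine_layout_def verts_of_singleton using L layout_mono[OF L(1) assms(3)] by blast
qed

lemma spine_layout_splice:
  fixes A :: "'n set" and c :: 'n and l1 r1 l2 r2 :: "'t \<Rightarrow> nat"
  defines "Y1 \<equiv> verts_of A" and "Y2 \<equiv> verts_of (subtree c)"
  assumes L1: "layout ET W1 Y1 n1 l1 r1" "load Y1 l1 r1 0 \<le> 3" "l1 (f s j) = 0"
      "\<forall>i\<in>{lo s..hi s}. \<exists>t<n1. l1 (f s i) \<le> t \<and> t \<le> r1 (f s i) \<and> load Y1 l1 r1 t \<le> 4"
    and L2: "layout ET W2 Y2 n2 l2 r2" "l2 (f c (cn c)) = 0"
    and AN: "A \<subseteq> N" "s \<in> A" "j \<in> {lo s..hi s}" and c: "c \<in> children s" and disj: "A \<inter> subtree c = {}"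
    and tau: "\<tau> < n1" "l1 (f s (at c)) \<le> \<tau>" "\<tau> \<le> r1 (f s (at c))"
    and W1: "W1 \<le> W"
    and gap: "\<And>t. t < n2 \<Longrightarrow>
      load (Y1 \<union> Y2) (splice_lo Y1 l1 \<tau> n2 l2) (splice_hi Y1 r1 \<tau> n2 {f s (at c)} r2) (\<tau> + 1 + t) \<le> W"
  shows "spine_layout W s j (A \<union> subtree c)"
proof -
  let ?L = "splice_lo Y1 l1 \<tau> n2 l2" and ?R = "splice_hi Y1 r1 \<tau> n2 {f s (at c)} r2"
  have cQ: "c \<in> Q" "par c = s" "c \<in> N" using c nonroots_subset by (auto simp: children_iff)
  have atc: "at c \<in> {lo s..hi s}" using attach_in_parent[OF cQ(1)] cQ(2) by simp
  have Ys: "f s i \<in> Y1" if "i \<in> {lo s..hi s}" for i using path_vert_in_verts_of[OF that AN(2)] unfolding Y1_def .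
  have dj: "Y1 \<inter> Y2 = {}" unfolding Y1_def Y2_def using verts_of_disjoint[OF AN(1) subtree_subset disj] .
  have "layout ET W (Y1 \<union> Y2) (n1 + n2) ?L ?R"
  proof (rule layout_splice[OF L1(1) L2(1) tau(1) dj _ W1 gap])
    show "\<forall>e\<in>ET. e \<subseteq> Y1 \<union> Y2 \<longrightarrow> e \<subseteq> Y1 \<or> e \<subseteq> Y2 \<or> (\<exists>p q. e = {p, q} \<and> p \<in> {f s (at c)} \<and>
        p \<in> Y1 \<and> l1 p \<le> \<tau> \<and> \<tau> \<le> r1 p \<and> q \<in> Y2 \<and> l2 q = 0)"
      using edge_between_parts[OF AN(1) cQ(3) disj] Ys[OF atc] tau(2,3) L2(2) cQ(2)
        path_vert_in_verts_of[OF contact_in_child[OF cQ(1)] subtree_self[OF cQ(3)]]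
      unfolding Y1_def Y2_def by blast
  qed
  moreover have "load (Y1 \<union> Y2) ?L ?R 0 \<le> 3"
    using load_splice_open_gap[OF L1(1) L2(1) tau(1) dj, of 0] L1(2) layoutD(2)[OF L1(1)]
    by (simp add: open_gap_def)
  moreover have "?L (f s j) = 0" using Ys[OF AN(3)] L1(3) by (simp add: splice_lo_def open_gap_def)
  moreover have "\<exists>t<n1 + n2. ?L (f s i) \<le> t \<and> t \<le> ?R (f s i) \<and> load (Y1 \<union> Y2) ?L ?R t \<le> 4"
    if i: "i \<in> {lo s..hi s}" for i
  proof -
    obtain t where t: "t < n1" "l1 (f s i) \<le> t" "t \<le> r1 (f s i)" "load Y1 l1 r1 t \<le> 4"
      using L1(4) i by blast
    have "open_gap \<tau> n2 t < n1 + n2" using t(1) by (simp add: open_gap_def)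
    then show ?thesis
      using splice_alive_left[OF L1(1) L2(1) tau(1) dj Ys[OF i] t(2,3)]
        load_splice_open_gap[OF L1(1) L2(1) tau(1) dj t(1)] t(4) by metis
  qed
  ultimately show ?thesis unfolding spine_layout_def verts_of_Un Y1_def Y2_def by blast
qed

lemma spine_layout_add_light:
  assumes sp: "spine_layout W s j A" and AN: "A \<subseteq> N" "s \<in> A" "j \<in> {lo s..hi s}"
    and c: "c \<in> children s" and disj: "A \<inter> subtree c = {}"
    and anc: "anchored_layout W' (verts_of (subtree c)) (f c (cn c))" and W: "W' + 4 \<le> W"
  shows "spine_layout W s j (A \<union> subtree c)"
proof -
  obtain n1 l1 r1 where L1: "layout ET W (verts_of A) n1 l1 r1" "load (verts_of A) l1 r1 0 \<le> 3"
    "l1 (f s j) = 0" "\<forall>i\<in>{lo s..hi s}. \<exists>t<n1. l1 (f s i) \<le> t \<and> t \<le> r1 (f s i) \<and> load (verts_of A) l1 r1 t \<le> 4"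
    using sp unfolding spine_layout_def by blast
  obtain n2 l2 r2 where L2: "layout ET W' (verts_of (subtree c)) n2 l2 r2" "l2 (f c (cn c)) = 0"
    using anc unfolding anchored_layout_def by blast
  have "at c \<in> {lo s..hi s}" using attach_in_parent[of c] c by (auto simp: children_iff)
  then obtain \<tau> where tau: "\<tau> < n1" "l1 (f s (at c)) \<le> \<tau>" "\<tau> \<le> r1 (f s (at c))"
    "load (verts_of A) l1 r1 \<tau> \<le> 4"
    using L1(4) by blast
  have dj: "verts_of A \<inter> verts_of (subtree c) = {}" using verts_of_disjoint[OF AN(1) subtree_subset disj] .
  show ?thesis
  proof (rule spine_layout_splice[OF L1 L2 AN c disj tau(1-3) order_refl])
    fix t assume "t < n2"
    then show "load (verts_of A \<union> verts_of (subtree c)) (splice_lo (verts_of A) l1 \<tau> n2 l2)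
        (splice_hi (verts_of A) r1 \<tau> n2 {f s (at c)} r2) (\<tau> + 1 + t) \<le> W"
      using load_splice_gap_le[OF L1(1) L2(1) tau(1) dj \<open>t < n2\<close>, where P = "{f s (at c)}"]
        layoutD(6)[OF L2(1) \<open>t < n2\<close>] tau(4) W by linarith
  qed
qed

lemma spine_layout_add_heavy:
  assumes s: "s \<in> N" "j \<in> {lo s..hi s}" and h: "h \<in> children s"
    and anc: "anchored_layout W (verts_of (subtree h)) (f h (cn h))" and W: "4 \<le> W"
  shows "spine_layout W s j ({s} \<union> subtree h)"
proof -
  have hQ: "h \<in> Q" "par h = s" using h by (auto simp: children_iff)
  have m: "at h \<in> {lo s..hi s}" using attach_in_parent[OF hQ(1)] hQ(2) by simp
  obtain n1 l1 r1 where L1: "layout ET 4 (path_verts s) n1 l1 r1" "load (path_verts s) l1 r1 0 \<le> 3"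
    "l1 (f s j) = 0" "r1 (f s (at h)) = n1 - 1"
  proof (rule that[of "hi s - lo s + 2" "node_l s j" "node_r s (at h)"])
    show "node_r s (at h) (f s (at h)) = hi s - lo s + 2 - 1" using node_layout(3)[OF s m] by simp
  qed (use node_layout(1,2)[OF s m] load_node_layout(2)[OF s(1)] in simp_all)
  obtain n2 l2 r2 where L2: "layout ET W (verts_of (subtree h)) n2 l2 r2"
    "load (verts_of (subtree h)) l2 r2 0 \<le> 3" "l2 (f h (cn h)) = 0"
    using anc unfolding anchored_layout_def by blast
  have Y1: "verts_of {s} = path_verts s" by (rule verts_of_singleton)
  have fs: "f s (at h) \<in> path_verts s" using m unfolding path_verts_def by blast
  have tau: "n1 - 1 < n1" "l1 (f s (at h)) \<le> n1 - 1" "n1 - 1 \<le> r1 (f s (at h))"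
    using layoutD(2)[OF L1(1)] layoutD(3)[OF L1(1) fs] L1(4) by auto
  have dj: "path_verts s \<inter> verts_of (subtree h) = {}"
    using verts_of_disjoint[of "{s}" "subtree h"] s(1) subtree_subset parent_notin_subtree_child[OF h] Y1
    by auto
  have "{s} \<inter> subtree h = {}" using parent_notin_subtree_child[OF h] by blast
  moreover have "\<forall>i\<in>{lo s..hi s}. \<exists>t<n1. l1 (f s i) \<le> t \<and> t \<le> r1 (f s i) \<and> load (path_verts s) l1 r1 t \<le> 4"
    using layout_point[OF L1(1)] unfolding path_verts_def by blast
  ultimately show ?thesis
  proof (intro spine_layout_splice[OF L1(1)[folded Y1] L1(2)[folded Y1] L1(3) _ L2(1,3) _ _ s(2) h _ tau W])
    fix t assume t: "t < n2"
    show "load (verts_of {s} \<union> verts_of (subtree h)) (splice_lo (verts_of {s}) l1 (n1 - 1) n2 l2)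
        (splice_hi (verts_of {s}) r1 (n1 - 1) n2 {f s (at h)} r2) (n1 - 1 + 1 + t) \<le> W"
      using load_splice_gap_end[OF L1(1)[folded Y1] L2(1) tau(1) dj[folded Y1] t refl, of "{f s (at h)}"]
        layoutD(6)[OF L2(1) t] L2(2) W by (cases "t = 0") auto
  qed (use s Y1 in auto)
qed

lemma spine_layout_add_lights:
  assumes sp: "spine_layout W s j A" and AN: "A \<subseteq> N" "s \<in> A" "j \<in> {lo s..hi s}"
    and C: "finite C" "C \<subseteq> children s" and disj: "A \<inter> (\<Union>c\<in>C. subtree c) = {}"
    and anc: "\<And>c. c \<in> C \<Longrightarrow> anchored_layout W' (verts_of (subtree c)) (f c (cn c))" and W: "W' + 4 \<le> W"
  shows "spine_layout W s j (A \<union> (\<Union>c\<in>C. subtree c))"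
  using C disj anc
proof (induction C rule: finite_induct)
  case (insert x C)
  have x: "x \<in> children s" using insert.prems(1) by blast
  have IH: "spine_layout W s j (A \<union> (\<Union>c\<in>C. subtree c))"
    using insert.IH insert.prems by blast
  have "subtree c \<inter> subtree x = {}" if "c \<in> C" for c
    using subtrees_children_disjoint[of c s x] that insert.prems(1) insert.hyps(2) x by blast
  then have "(A \<union> (\<Union>c\<in>C. subtree c)) \<inter> subtree x = {}" using insert.prems(2) by blast
  moreover have "A \<union> (\<Union>c\<in>C. subtree c) \<subseteq> N" using AN(1) subtree_subset by blast
  moreover have "anchored_layout W' (verts_of (subtree x)) (f x (cn x))" using insert.prems(3) by blast
  ultimately have "spine_layout W s j ((A \<union> (\<Union>c\<in>C. subtree c)) \<union> subtree x)"
    using spine_layout_add_light[OF IH _ _ AN(3) x _ _ W] AN(2) by blast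
  then show ?case by (simp add: Un_ac)
qed (use sp in simp)

lemma anchored_layout_step:
  assumes light: "\<And>c j. c \<in> N \<Longrightarrow> \<not> has_cbt k c \<Longrightarrow> j \<in> {lo c..hi c} \<Longrightarrow>
      anchored_layout (4 * k) (verts_of (subtree c)) (f c j)"
  shows "s \<in> N \<Longrightarrow> \<not> has_cbt (Suc k) s \<Longrightarrow> j \<in> {lo s..hi s} \<Longrightarrow>
      anchored_layout (4 * k + 4) (verts_of (subtree s)) (f s j)"
proof (induction "card (subtree s)" arbitrary: s j rule: less_induct)
  case less
  have s: "s \<in> N" and j: "j \<in> {lo s..hi s}" using less.prems by simp_all
  have chN: "c \<in> N" and cn: "cn c \<in> {lo c..hi c}" if "c \<in> children s" for c
    using that nonroots_subset contact_in_child by (auto simp: children_iff)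
  have IH: "anchored_layout (4 * k + 4) (verts_of (subtree c)) (f c (cn c))" if "c \<in> children s" for c
    using less.hyps[OF card_subtree_child_less[OF s that] chN[OF that] _ cn[OF that]]
      has_cbt_parent[OF _ that] less.prems(2) by blast
  define H where "H = {c \<in> children s. has_cbt k c}"
  have H_le1: "c1 = c2" if "c1 \<in> H" "c2 \<in> H" for c1 c2
    using that at_most_one_child_has_cbt[OF less.prems(2)] unfolding H_def by blast
  have start: "spine_layout (4 * k + 4) s j ({s} \<union> (\<Union>c\<in>H. subtree c))"
  proof (cases "H = {}")
    case True
    then show ?thesis using spine_layout_node[OF s j] by simp
  next
    case False
    then obtain h where h: "H = {h}" using H_le1 by blast
    then have "h \<in> children s" unfolding H_def by blast
    then show ?thesis using spine_layout_add_heavy[OF s j _ IH] h by simp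
  qed
  define C where "C = children s - H"
  have fin: "finite C" unfolding C_def
    using finite_subset[OF _ finite_nodes, of "children s"] chN by blast
  have disj: "({s} \<union> (\<Union>c\<in>H. subtree c)) \<inter> (\<Union>c\<in>C. subtree c) = {}"
    using parent_notin_subtree_child subtrees_children_disjoint unfolding C_def H_def by blast
  have "spine_layout (4 * k + 4) s j (({s} \<union> (\<Union>c\<in>H. subtree c)) \<union> (\<Union>c\<in>C. subtree c))"
  proof (rule spine_layout_add_lights[OF start _ _ j fin _ disj])
    show "anchored_layout (4 * k) (verts_of (subtree c)) (f c (cn c))" if "c \<in> C" for c
    proof -
      have c: "c \<in> children s" "\<not> has_cbt k c" using that unfolding C_def H_def by auto
      show ?thesis using light[OF chN[OF c(1)] c(2) cn[OF c(1)]] .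
    qed
  qed (use s subtree_subset C_def in auto)
  moreover have "({s} \<union> (\<Union>c\<in>H. subtree c)) \<union> (\<Union>c\<in>C. subtree c) = subtree s"
    using subtree_decomp[OF s] unfolding C_def H_def by blast
  ultimately show ?case using anchored_layout_spine by simp
qed

lemma anchored_layout_rank:
  "s \<in> N \<Longrightarrow> \<not> has_cbt (Suc k) s \<Longrightarrow> j \<in> {lo s..hi s} \<Longrightarrow>
     anchored_layout (4 * k + 4) (verts_of (subtree s)) (f s j)"
proof (induction k arbitrary: s j)
  case 0
  show ?case by (rule anchored_layout_step[OF _ 0]) (use has_cbt.leaf in blast)
next
  case (Suc k)
  have "4 * Suc k = 4 * k + 4" by simp
  then show ?case using anchored_layout_step[OF _ Suc.prems] Suc.IH by metis
qed

lemma forest_layout: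
  assumes "\<And>s. s \<in> N \<Longrightarrow> \<not> has_cbt (Suc k) s"
  shows "\<exists>n l r. layout ET (4 * k + 4) (verts_of N) n l r"
proof -
  have layout_roots: "\<exists>n l r. layout ET (4 * k + 4) (verts_of (\<Union>c\<in>C. subtree c)) n l r"
    if "finite C" "C \<subseteq> N - Q" for C
    using that
  proof (induction C rule: finite_induct)
    case empty
    then show ?case using layout_empty by (force simp: verts_of_def)
  next
    case (insert x C)
    let ?A = "\<Union>c\<in>C. subtree c"
    have x: "x \<in> N" "x \<notin> Q" using insert.prems by auto
    obtain n1 l1 r1 where L1: "layout ET (4 * k + 4) (verts_of ?A) n1 l1 r1"
      using insert by blast
    obtain n2 l2 r2 where L2: "layout ET (4 * k + 4) (verts_of (subtree x)) n2 l2 r2"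
      using anchored_layout_rank[OF x(1) assms[OF x(1)], of "lo x"] lo_le_hi[OF x(1)]
      unfolding anchored_layout_def by auto
    have dj: "?A \<inter> subtree x = {}"
      using subtrees_roots_disjoint[of _ x] insert.prems insert.hyps(2) by blast
    have AN: "?A \<subseteq> N" using subtree_subset by blast
    have "\<exists>n l r. layout ET (4 * k + 4) (verts_of ?A \<union> verts_of (subtree x)) n l r"
      using layout_append[OF L1 L2 verts_of_disjoint[OF AN subtree_subset dj]]
        edge_between_parts[OF AN x(1) dj] x(2) by blast
    then show ?case by (simp add: verts_of_Un Un_commute)
  qed
  moreover have "(\<Union>c\<in>N - Q. subtree c) = N" using in_subtree_of_root subtree_subset by blast
  ultimately show ?thesis using layout_roots[OF finite_Diff[OF finite_nodes] order_refl] by simp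
qed

end

section \<open>Rooted trees and SPQR-trees\<close>

definition rooted_tree :: "'n set \<Rightarrow> 'n set set \<Rightarrow> ('n \<Rightarrow> 'n) \<Rightarrow> ('n \<Rightarrow> nat) \<Rightarrow> 'n \<Rightarrow> bool" where
  "rooted_tree M F par dep z \<longleftrightarrow> z \<in> M \<and> (\<forall>y\<in>M - {z}. par y \<in> M \<and> dep (par y) < dep y) \<and>
     F = {{y, par y} | y. y \<in> M - {z}}"

lemma rooted_tree_singleton: "rooted_tree {a} {} par dep a"
  unfolding rooted_tree_def by auto

lemma rooted_tree_glue:
  assumes T1: "rooted_tree M1 F1 par1 dep1 z" and T2: "rooted_tree M2 F2 par2 dep2 b"
    and disj: "M1 \<inter> M2 = {}" and x: "x \<in> M1"
  shows "rooted_tree (M1 \<union> M2) (F1 \<union> F2 \<union> {{x, b}})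
    (\<lambda>u. if u \<in> M1 then par1 u else if u = b then x else par2 u)
    (\<lambda>u. if u \<in> M1 then dep1 u else dep2 u + dep1 x + 1) z"
  (is "rooted_tree _ _ ?par ?dep z")
proof -
  have z: "z \<in> M1" "z \<notin> M2" and b: "b \<in> M2" "b \<notin> M1"
    using T1 T2 disj unfolding rooted_tree_def by auto
  have "?par y \<in> M1 \<union> M2 \<and> ?dep (?par y) < ?dep y" if "y \<in> M1 \<union> M2 - {z}" for y
    using that T1 T2 disj x unfolding rooted_tree_def by (auto split: if_splits)
  moreover have "{{y, ?par y} | y. y \<in> M1 \<union> M2 - {z}} =
      {{y, par1 y} | y. y \<in> M1 - {z}} \<union> {{y, par2 y} | y. y \<in> M2 - {b}} \<union> {{x, b}}"
    using z b disj by (auto simp: insert_commute)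
  ultimately show ?thesis using T1 T2 z unfolding rooted_tree_def by auto
qed

lemma rooted_tree_glue_family:
  assumes T: "rooted_tree M F par dep z" and p: "p \<in> M" and J: "finite J"
    and sub: "\<And>j. j \<in> J \<Longrightarrow> \<exists>par dep. rooted_tree (MJ j) (FJ j) par dep (a j)"
    and fresh: "\<And>j. j \<in> J \<Longrightarrow> M \<inter> MJ j = {}"
    and disj: "\<And>i j. i \<in> J \<Longrightarrow> j \<in> J \<Longrightarrow> i \<noteq> j \<Longrightarrow> MJ i \<inter> MJ j = {}"
  shows "\<exists>par dep. rooted_tree (M \<union> (\<Union>j\<in>J. MJ j)) (F \<union> (\<Union>j\<in>J. FJ j) \<union> {{p, a j} | j. j \<in> J}) par dep z"
  using J sub fresh disj
proof (induction J rule: finite_induct)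
  case empty
  then show ?case using T by auto
next
  case (insert j J)
  obtain par1 dep1 where T1: "rooted_tree (M \<union> (\<Union>i\<in>J. MJ i)) (F \<union> (\<Union>i\<in>J. FJ i) \<union> {{p, a i} | i. i \<in> J})
      par1 dep1 z"
    using insert.IH insert.prems by (metis insert_iff)
  obtain par2 dep2 where T2: "rooted_tree (MJ j) (FJ j) par2 dep2 (a j)" using insert.prems(1) by blast
  have "(M \<union> (\<Union>i\<in>J. MJ i)) \<inter> MJ j = {}"
    using insert.prems(2,3) insert.hyps(2) by fastforce
  moreover have "M \<union> (\<Union>i\<in>insert j J. MJ i) = M \<union> (\<Union>i\<in>J. MJ i) \<union> MJ j" by auto
  moreover have "F \<union> (\<Union>i\<in>insert j J. FJ i) \<union> {{p, a i} | i. i \<in> insert j J} =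
      F \<union> (\<Union>i\<in>J. FJ i) \<union> {{p, a i} | i. i \<in> J} \<union> FJ j \<union> {{p, a j}}" by auto
  ultimately show ?case using rooted_tree_glue[OF T1 T2, of p] p by auto
qed

lemma rooted_tree_star:
  assumes J: "finite J"
    and sub: "\<And>j z. j \<in> J \<Longrightarrow> z \<in> M j \<Longrightarrow> \<exists>par dep. rooted_tree (M j) (F j) par dep z"
    and a: "\<And>j. j \<in> J \<Longrightarrow> a j \<in> M j"
    and disj: "\<And>i j. i \<in> J \<Longrightarrow> j \<in> J \<Longrightarrow> i \<noteq> j \<Longrightarrow> M i \<inter> M j = {}"
    and fresh: "\<And>j. j \<in> J \<Longrightarrow> {p} \<inter> M j = {}"
    and z: "z \<in> insert p (\<Union>j\<in>J. M j)"
  shows "\<exists>par dep. rooted_tree (insert p (\<Union>j\<in>J. M j)) ((\<Union>j\<in>J. F j) \<union> {{p, a j} | j. j \<in> J}) par dep z"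
proof (cases "z = p")
  case True
  have "\<exists>par dep. rooted_tree ({p} \<union> (\<Union>j\<in>J. M j)) ({} \<union> (\<Union>j\<in>J. F j) \<union> {{p, a j} | j. j \<in> J}) par dep p"
    by (rule rooted_tree_glue_family[OF rooted_tree_singleton _ J sub[OF _ a] fresh disj]) auto
  then show ?thesis using True by simp
next
  case False
  then obtain j0 where j0: "j0 \<in> J" "z \<in> M j0" using z by blast
  obtain par0 dep0 where "rooted_tree (M j0) (F j0) par0 dep0 z" using sub[OF j0] by blast
  from rooted_tree_glue[OF this rooted_tree_singleton[of p] _ a[OF j0(1)]]
  obtain par1 dep1 where T1: "rooted_tree (M j0 \<union> {p}) (F j0 \<union> {} \<union> {{a j0, p}}) par1 dep1 z"
    using fresh[OF j0(1)] by blast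
  have "\<exists>par dep. rooted_tree ((M j0 \<union> {p}) \<union> (\<Union>j\<in>J - {j0}. M j))
      ((F j0 \<union> {} \<union> {{a j0, p}}) \<union> (\<Union>j\<in>J - {j0}. F j) \<union> {{p, a j} | j. j \<in> J - {j0}}) par dep z"
  proof (rule rooted_tree_glue_family[OF T1, where a = a])
    show "(M j0 \<union> {p}) \<inter> M j = {}" if "j \<in> J - {j0}" for j
      using that disj[OF j0(1), of j] fresh[of j] by auto
  qed (use J sub a disj in auto)
  moreover have "(M j0 \<union> {p}) \<union> (\<Union>j\<in>J - {j0}. M j) = insert p (\<Union>j\<in>J. M j)" using j0(1) by blast
  moreover have "(F j0 \<union> {} \<union> {{a j0, p}}) \<union> (\<Union>j\<in>J - {j0}. F j) \<union> {{p, a j} | j. j \<in> J - {j0}} =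
      (\<Union>j\<in>J. F j) \<union> {{p, a j} | j. j \<in> J}"
    using j0(1) by (auto simp: insert_commute)
  ultimately show ?thesis by simp
qed

lemma spqr_tree_rooted:
  "is_spqr_tree V E S \<Longrightarrow>
     finite (nodes S) \<and> nodes S \<noteq> {} \<and> (\<forall>z\<in>nodes S. \<exists>par dep. rooted_tree (nodes S) (tedges S) par dep z)"
proof (induction rule: is_spqr_tree.induct)
  case (split V E x y Cs Sub aC p S)
  have finCs: "finite Cs" using split.hyps(10) by (metis card.infinite not_numeral_le_zero)
  have "\<exists>par dep. rooted_tree (insert p (\<Union>C\<in>Cs. nodes (Sub C)))
      ((\<Union>C\<in>Cs. tedges (Sub C)) \<union> {{p, aC C} | C. C \<in> Cs}) par dep z"
    if "z \<in> insert p (\<Union>C\<in>Cs. nodes (Sub C))" for z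
    by (rule rooted_tree_star[OF finCs _ _ _ _ that]) (use split.IH split.hyps(11-13) in blast)+
  moreover have "finite (nodes S)" using split.hyps(14) finCs split.IH by simp
  ultimately show ?case using split.hyps(14,15) by auto
qed (use rooted_tree_singleton in fastforce)+

section \<open>The subtrees \<open>S[v]\<close> and \<open>T[v]\<close>\<close>

lemma is_path_decompD:
  assumes "is_path_decomp V E bs"
  shows "i < length bs \<Longrightarrow> bs ! i \<subseteq> V" "u \<in> V \<Longrightarrow> \<exists>i<length bs. u \<in> bs ! i"
    "i \<le> j \<Longrightarrow> j \<le> k \<Longrightarrow> k < length bs \<Longrightarrow> u \<in> bs ! i \<Longrightarrow> u \<in> bs ! k \<Longrightarrow> u \<in> bs ! j"
proof -
  have bags: "\<forall>B\<in>set bs. B \<subseteq> V"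
    using assms unfolding is_path_decomp_def by (elim conjE) assumption
  have cover: "\<forall>u\<in>V. \<exists>i<length bs. u \<in> bs ! i"
    using assms unfolding is_path_decomp_def by (elim conjE) assumption
  have convex: "\<forall>u i j k. i \<le> j \<and> j \<le> k \<and> k < length bs \<and> u \<in> bs ! i \<and> u \<in> bs ! k \<longrightarrow> u \<in> bs ! j"
    using assms unfolding is_path_decomp_def by (elim conjE) assumption
  show "bs ! i \<subseteq> V" if "i < length bs" using bags nth_mem[OF that] by blast
  show "\<exists>i<length bs. u \<in> bs ! i" if "u \<in> V" using cover that by blast
  show "u \<in> bs ! j" if "i \<le> j" "j \<le> k" "k < length bs" "u \<in> bs ! i" "u \<in> bs ! k"
    using convex that by blast
qed

text \<open>\<open>T[v]\<close> is the blow-up of the subtree \<open>S[v]\<close>: an S- or R-node \<open>a\<close> becomes the interval of nodes of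
  \<open>P\<^sub>a\<close> whose bags contain \<open>v\<close>, a P-node stays a single node, and \<open>at\<close>, \<open>cn\<close> locate the two ends of the
  edge of \<open>T\<close> that realises a tree edge of \<open>S[v]\<close>.\<close>
locale spqr_rooted_td =
  fixes S :: "('n, 'v) spqr" and pd :: "'n \<Rightarrow> 'v set list" and att :: "'n \<Rightarrow> 'n \<Rightarrow> nat" and v :: 'v
    and par :: "'n \<Rightarrow> 'n" and dep :: "'n \<Rightarrow> nat" and z :: 'n
  assumes finite_spqr_nodes: "finite (nodes S)"
    and rooted: "rooted_tree (nodes S) (tedges S) par dep z"
    and td: "spqr_td S pd att"
begin

definition Qv :: "'n set" where
  "Qv = {y \<in> spqr_sub_verts S v. y \<noteq> z \<and> par y \<in> spqr_sub_verts S v}"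

definition bag_idx :: "'n \<Rightarrow> nat set" where
  "bag_idx a = {i. i < length (pd a) \<and> v \<in> pd a ! i}"

definition lo :: "'n \<Rightarrow> nat" where
  "lo a = (if ntype S a = PNode then 0 else Min (bag_idx a))"

definition hi :: "'n \<Rightarrow> nat" where
  "hi a = (if ntype S a = PNode then 0 else Max (bag_idx a))"

definition T_node :: "'n \<Rightarrow> nat \<Rightarrow> 'n \<times> nat + 'n" where
  "T_node a i = (if ntype S a = PNode then Inr a else Inl (a, i))"

definition at :: "'n \<Rightarrow> nat" where
  "at y = (if ntype S (par y) \<noteq> PNode \<and> ntype S y = PNode then att y (par y) else lo (par y))"

definition cn :: "'n \<Rightarrow> nat" where
  "cn y = (if ntype S y \<noteq> PNode \<and> ntype S (par y) = PNode then att (par y) y else lo y)"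

lemma in_sub_verts: "a \<in> spqr_sub_verts S v \<longleftrightarrow> a \<in> nodes S \<and> v \<in> hverts S a"
  unfolding spqr_sub_verts_def by blast

lemma parent_in_tree: "y \<in> nodes S - {z} \<Longrightarrow> par y \<in> nodes S \<and> dep (par y) < dep y"
  using rooted unfolding rooted_tree_def by blast

lemma tedges_eq: "tedges S = {{y, par y} | y. y \<in> nodes S - {z}}"
  using rooted unfolding rooted_tree_def by blast

lemma tree_edge_in_Qv: "y \<in> Qv \<Longrightarrow> {y, par y} \<in> tedges S"
  unfolding tedges_eq Qv_def spqr_sub_verts_def by blast

lemma pd_decomp:
  "a \<in> nodes S \<Longrightarrow> ntype S a \<noteq> PNode \<Longrightarrow>
     is_path_decomp (hverts S a) (set_mset (hreal S a + hvirt S a)) (pd a)"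
  using td unfolding spqr_td_def Let_def by blast

lemma pd_attach:
  "b \<in> nodes S \<Longrightarrow> ntype S b = PNode \<Longrightarrow> a \<in> nodes S \<Longrightarrow> {a, b} \<in> tedges S \<Longrightarrow> ntype S a \<noteq> PNode \<Longrightarrow>
     att b a < length (pd a) \<and> hverts S b \<subseteq> pd a ! att b a"
  using td unfolding spqr_td_def by blast

lemma bag_idx_ne:
  assumes a: "a \<in> spqr_sub_verts S v" "ntype S a \<noteq> PNode"
  shows "finite (bag_idx a)" "bag_idx a \<noteq> {}"
proof -
  show "finite (bag_idx a)" unfolding bag_idx_def by simp
  show "bag_idx a \<noteq> {}"
    using is_path_decompD(2)[OF pd_decomp] a unfolding in_sub_verts bag_idx_def by blast
qed

lemma bag_idx_interval:
  assumes a: "a \<in> spqr_sub_verts S v" "ntype S a \<noteq> PNode"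
  shows "{lo a..hi a} = bag_idx a"
proof (intro equalityI subsetI)
  have pd: "is_path_decomp (hverts S a) (set_mset (hreal S a + hvirt S a)) (pd a)"
    using pd_decomp a in_sub_verts by blast
  have mm: "Min (bag_idx a) \<in> bag_idx a" "Max (bag_idx a) \<in> bag_idx a" using bag_idx_ne[OF a] by simp_all
  fix i assume "i \<in> {lo a..hi a}"
  then have "Min (bag_idx a) \<le> i" "i \<le> Max (bag_idx a)" using a unfolding lo_def hi_def by auto
  then show "i \<in> bag_idx a"
    using mm is_path_decompD(3)[OF pd, of "Min (bag_idx a)" i "Max (bag_idx a)" v]
    unfolding bag_idx_def by auto
next
  fix i assume "i \<in> bag_idx a"
  then show "i \<in> {lo a..hi a}" using bag_idx_ne[OF a] a unfolding lo_def hi_def by auto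
qed

lemma lo_le_hi:
  assumes a: "a \<in> spqr_sub_verts S v"
  shows "lo a \<le> hi a"
proof (cases "ntype S a = PNode")
  case False
  then obtain i where "i \<in> bag_idx a" using bag_idx_ne[OF a] by blast
  then have "Min (bag_idx a) \<le> Max (bag_idx a)"
    using Min_le[OF bag_idx_ne(1)[OF a False]] Max_ge[OF bag_idx_ne(1)[OF a False]] le_trans by blast
  then show ?thesis using False unfolding lo_def hi_def by simp
qed (simp add: lo_def hi_def)


sublocale sub: rooted_forest "spqr_sub_verts S v" Qv par dep
proof
  show "finite (spqr_sub_verts S v)" using finite_spqr_nodes unfolding spqr_sub_verts_def by simp
  show "Qv \<subseteq> spqr_sub_verts S v" "y \<in> Qv \<Longrightarrow> par y \<in> spqr_sub_verts S v" for y unfolding Qv_def by auto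
  show "y \<in> Qv \<Longrightarrow> dep (par y) < dep y" for y
    using parent_in_tree[of y] unfolding Qv_def spqr_sub_verts_def by blast
qed

lemma forest_edges_eq: "sub.forest_edges = spqr_sub_edges S v"
proof (intro equalityI subsetI)
  fix e assume "e \<in> sub.forest_edges"
  then obtain y where "y \<in> Qv" "e = {y, par y}" unfolding sub.forest_edges_def by blast
  then show "e \<in> spqr_sub_edges S v"
    using tree_edge_in_Qv unfolding spqr_sub_edges_def induced_edges_def Qv_def by auto
next
  fix e assume "e \<in> spqr_sub_edges S v"
  then have e: "e \<in> tedges S" "e \<subseteq> spqr_sub_verts S v" unfolding spqr_sub_edges_def induced_edges_def by auto
  then obtain y where y: "y \<in> nodes S - {z}" "e = {y, par y}" unfolding tedges_eq by blast
  with e have "y \<in> Qv" unfolding Qv_def by auto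
  with y(2) show "e \<in> sub.forest_edges" unfolding sub.forest_edges_def by blast
qed

lemma T_node_PNode: "ntype S a = PNode \<Longrightarrow> T_node a i = Inr a"
  and T_node_not_PNode: "ntype S a \<noteq> PNode \<Longrightarrow> T_node a i = Inl (a, i)"
  unfolding T_node_def by simp_all

lemma in_T_sub_verts: "t \<in> T_sub_verts S pd v \<longleftrightarrow>
   (\<exists>a i. t = Inl (a, i) \<and> a \<in> nodes S \<and> ntype S a \<noteq> PNode \<and> i < length (pd a) \<and> v \<in> pd a ! i) \<or>
   (\<exists>b. t = Inr b \<and> b \<in> nodes S \<and> ntype S b = PNode \<and> v \<in> hverts S b)"
  unfolding T_sub_verts_def T_verts_def T_bag_def by auto

lemma bag_in_hverts: "a \<in> nodes S \<Longrightarrow> ntype S a \<noteq> PNode \<Longrightarrow> i < length (pd a) \<Longrightarrow> pd a ! i \<subseteq> hverts S a"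
  using is_path_decompD(1)[OF pd_decomp] by blast

lemma T_sub_verts_eq: "(\<Union>s\<in>spqr_sub_verts S v. T_node s ` {lo s..hi s}) = T_sub_verts S pd v"
proof (intro equalityI subsetI)
  fix u assume "u \<in> (\<Union>s\<in>spqr_sub_verts S v. T_node s ` {lo s..hi s})"
  then obtain s i where si: "s \<in> spqr_sub_verts S v" "i \<in> {lo s..hi s}" "u = T_node s i" by blast
  show "u \<in> T_sub_verts S pd v"
  proof (cases "ntype S s = PNode")
    case True
    then show ?thesis using si unfolding in_T_sub_verts in_sub_verts by (simp add: T_node_PNode)
  next
    case False
    then have "i \<in> bag_idx s" using bag_idx_interval[OF si(1)] si(2) by blast
    then show ?thesis using si False unfolding in_T_sub_verts in_sub_verts bag_idx_def
      by (simp add: T_node_not_PNode)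
  qed
next
  fix u assume "u \<in> T_sub_verts S pd v"
  then consider a i where "u = Inl (a, i)" "a \<in> nodes S" "ntype S a \<noteq> PNode" "i < length (pd a)" "v \<in> pd a ! i"
    | b where "u = Inr b" "b \<in> nodes S" "ntype S b = PNode" "v \<in> hverts S b"
    unfolding in_T_sub_verts by blast
  then show "u \<in> (\<Union>s\<in>spqr_sub_verts S v. T_node s ` {lo s..hi s})"
  proof cases
    case 1
    then have a: "a \<in> spqr_sub_verts S v" using bag_in_hverts in_sub_verts by blast
    then have "i \<in> {lo a..hi a}" using 1 bag_idx_interval[OF a] unfolding bag_idx_def by blast
    then have "u \<in> T_node a ` {lo a..hi a}" using 1 by (simp add: T_node_not_PNode)
    then show ?thesis using a by blast
  next
    case 2
    then have "b \<in> spqr_sub_verts S v" "u \<in> T_node b ` {lo b..hi b}"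
      using in_sub_verts[of b] by (auto simp: T_node_PNode lo_def hi_def)
    then show ?thesis by blast
  qed
qed


lemma T_node_eq: "T_node s i = T_node s' i' \<Longrightarrow> s = s'"
  unfolding T_node_def by (auto split: if_splits)

lemma lo_hi_PNode: "ntype S a = PNode \<Longrightarrow> lo a = 0 \<and> hi a = 0"
  unfolding lo_def hi_def by simp

lemma T_node_inj: "inj_on (T_node s) {lo s..hi s}"
  by (cases "ntype S s = PNode") (auto simp: inj_on_def lo_hi_PNode T_node_not_PNode)

lemma Qv_nodes: "y \<in> Qv \<Longrightarrow> y \<in> spqr_sub_verts S v \<and> par y \<in> spqr_sub_verts S v"
  unfolding Qv_def by blast

lemma attach_in_parent: "y \<in> Qv \<Longrightarrow> at y \<in> {lo (par y)..hi (par y)}"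
proof (cases "ntype S (par y) \<noteq> PNode \<and> ntype S y = PNode")
  case True
  assume y: "y \<in> Qv"
  have "{par y, y} \<in> tedges S" using tree_edge_in_Qv[OF y] by (simp add: insert_commute)
  then have "att y (par y) < length (pd (par y)) \<and> hverts S y \<subseteq> pd (par y) ! att y (par y)"
    using pd_attach[of y "par y"] True Qv_nodes[OF y] in_sub_verts by blast
  then have "att y (par y) \<in> bag_idx (par y)" using Qv_nodes[OF y] in_sub_verts unfolding bag_idx_def by blast
  then show ?thesis using bag_idx_interval[of "par y"] True Qv_nodes[OF y] unfolding at_def by simp
next
  case False
  assume "y \<in> Qv"
  then show ?thesis using False lo_le_hi Qv_nodes unfolding at_def by auto
qed

lemma contact_in_child: "y \<in> Qv \<Longrightarrow> cn y \<in> {lo y..hi y}"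
proof (cases "ntype S y \<noteq> PNode \<and> ntype S (par y) = PNode")
  case True
  assume y: "y \<in> Qv"
  have "att (par y) y < length (pd y) \<and> hverts S (par y) \<subseteq> pd y ! att (par y) y"
    using pd_attach[of "par y" y] tree_edge_in_Qv[OF y] True Qv_nodes[OF y] in_sub_verts by blast
  then have "att (par y) y \<in> bag_idx y" using Qv_nodes[OF y] in_sub_verts unfolding bag_idx_def by blast
  then show ?thesis using bag_idx_interval[of y] True Qv_nodes[OF y] unfolding cn_def by simp
next
  case False
  assume "y \<in> Qv"
  then show ?thesis using False lo_le_hi Qv_nodes unfolding cn_def by auto
qed

lemma T_edges_classified:
  assumes e: "e \<in> T_edges S pd att" "e \<subseteq> (\<Union>s\<in>spqr_sub_verts S v. T_node s ` {lo s..hi s})"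
  shows "(\<exists>s i. s \<in> spqr_sub_verts S v \<and> lo s \<le> i \<and> Suc i \<le> hi s \<and> e = {T_node s i, T_node s (Suc i)}) \<or>
    (\<exists>y\<in>Qv. e = {T_node (par y) (at y), T_node y (cn y)})"
proof -
  have eT: "e \<subseteq> T_sub_verts S pd v" using e(2) T_sub_verts_eq by simp
  from e(1) consider
      a i where "e = {Inl (a, i), Inl (a, Suc i)}" "a \<in> nodes S" "ntype S a \<noteq> PNode" "Suc i < length (pd a)"
    | a b where "e = {Inr b, Inl (a, att b a)}" "a \<in> nodes S" "b \<in> nodes S" "ntype S b = PNode"
        "ntype S a \<noteq> PNode" "{a, b} \<in> tedges S"
    unfolding T_edges_def by blast
  then show ?thesis
  proof cases
    case (1 a i)
    then have "Inl (a, i) \<in> T_sub_verts S pd v" "Inl (a, Suc i) \<in> T_sub_verts S pd v" using eT by auto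
    then have v: "v \<in> pd a ! i" "v \<in> pd a ! Suc i" by (simp_all add: in_T_sub_verts)
    then have a: "a \<in> spqr_sub_verts S v" using bag_in_hverts[OF 1(2,3), of i] 1(4) in_sub_verts 1(2) by auto
    then have "i \<in> {lo a..hi a}" "Suc i \<in> {lo a..hi a}"
      using v 1(4) bag_idx_interval[OF a 1(3)] unfolding bag_idx_def by auto
    moreover have "e = {T_node a i, T_node a (Suc i)}" using 1(1,3) by (simp add: T_node_not_PNode)
    ultimately show ?thesis using a by auto
  next
    case (2 a b)
    then have "Inr b \<in> T_sub_verts S pd v" "Inl (a, att b a) \<in> T_sub_verts S pd v" using eT by auto
    then have vb: "v \<in> hverts S b" and va: "att b a < length (pd a)" "v \<in> pd a ! att b a"
      by (simp_all add: in_T_sub_verts)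
    have ab: "a \<in> spqr_sub_verts S v" "b \<in> spqr_sub_verts S v"
      using bag_in_hverts[OF 2(2,5) va(1)] va(2) vb 2(2,3) in_sub_verts by auto
    obtain u where u: "u \<in> nodes S - {z}" "{a, b} = {u, par u}" using 2(6) unfolding tedges_eq by blast
    then have cases: "a = u \<and> b = par u \<or> a = par u \<and> b = u" by (auto simp: doubleton_eq_iff)
    then have "u \<in> Qv" using u(1) ab unfolding Qv_def by blast
    moreover have "e = {T_node (par u) (at u), T_node u (cn u)}"
      using cases 2 lo_hi_PNode[of b]
      by (auto simp: at_def cn_def T_node_PNode T_node_not_PNode insert_commute)
    ultimately show ?thesis by blast
  qed
qed

sublocale T: blown_up_forest "spqr_sub_verts S v" Qv par dep T_node lo hi at cn "T_edges S pd att"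
proof
  show "lo s \<le> hi s" "inj_on (T_node s) {lo s..hi s}" if "s \<in> spqr_sub_verts S v" for s
    using that by (simp_all add: lo_le_hi T_node_inj)
  show "T_node s i = T_node s' i' \<Longrightarrow> s = s'" for s s' i i' by (rule T_node_eq)
  show "at y \<in> {lo (par y)..hi (par y)}" "cn y \<in> {lo y..hi y}" if "y \<in> Qv" for y
    using that by (simp_all only: attach_in_parent contact_in_child)
qed (fact T_edges_classified)


lemma pathwidth_T_sub_le:
  assumes "\<And>s. s \<in> spqr_sub_verts S v \<Longrightarrow> \<not> sub.has_cbt (Suc k) s"
  shows "pathwidth (T_sub_verts S pd v) (T_sub_edges S pd att v) \<le> 4 * k + 3"
proof -
  have verts: "T.verts_of (spqr_sub_verts S v) = T_sub_verts S pd v"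
    unfolding T.verts_of_def T.path_verts_def T_sub_verts_eq ..
  obtain n l r where "layout (T_edges S pd att) (4 * k + 4) (T_sub_verts S pd v) n l r"
    using T.forest_layout assms unfolding verts by blast
  then have "layout (T_sub_edges S pd att v) (4 * k + 4) (T_sub_verts S pd v) n l r"
    by (rule layout_edges_subset) (auto simp: T_sub_edges_def induced_edges_def)
  from pathwidth_le_layout[OF this] show ?thesis
    by (simp add: T_sub_edges_def induced_edges_def)
qed

lemma subdivision_of_has_cbt:
  "sub.has_cbt h s \<Longrightarrow> contains_subdivision (cbt_verts h) (cbt_edges h) (spqr_sub_verts S v) (spqr_sub_edges S v)"
  using sub.contains_subdivision_has_cbt forest_edges_eq by simp

end

lemma linear_le_exp: "4 * k + 6 \<le> (2::nat) ^ (2 * Suc k + 1)"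
proof (induction k)
  case (Suc k)
  have "(2::nat) ^ (2 * Suc (Suc k) + 1) = 4 * 2 ^ (2 * Suc k + 1)" "4 * Suc k + 6 = 4 * k + 10" by simp_all
  then show ?case using Suc.IH by linarith
qed simp

theorem lemma15:
  fixes V :: "'v set" and E :: "'v set set" and S :: "('n, 'v) spqr"
    and pd :: "'n \<Rightarrow> 'v set list" and att :: "'n \<Rightarrow> 'n \<Rightarrow> nat"
    and v :: 'v and h :: nat
  assumes "k_connected 2 V E"
    and "is_spqr_tree V E S"
    and "spqr_td S pd att"
    and "v \<in> V"
    and "h \<ge> 1"
    and "pathwidth (T_sub_verts S pd v) (T_sub_edges S pd att v) > 2 ^ (2 * h + 1) - 3"
  shows "contains_subdivision (cbt_verts h) (cbt_edges h) (spqr_sub_verts S v) (spqr_sub_edges S v)"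
proof (rule ccontr)
  assume no_subdivision: "\<not> ?thesis"
  obtain z par dep where "finite (nodes S)" "rooted_tree (nodes S) (tedges S) par dep z"
    using spqr_tree_rooted[OF assms(2)] by blast
  then interpret spqr_rooted_td S pd att v par dep z
    using assms(3) by unfold_locales
  obtain k where k: "h = Suc k" using assms(5) by (cases h) auto
  have "pathwidth (T_sub_verts S pd v) (T_sub_edges S pd att v) \<le> 4 * k + 3"
    using pathwidth_T_sub_le subdivision_of_has_cbt no_subdivision k by blast
  moreover have "4 * k + 6 \<le> 2 ^ (2 * h + 1)" using linear_le_exp[of k] k by simp
  ultimately show False using assms(6) by linarith
qed

end
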